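(* Let $f\colon[0,1]\to\mathbb{R}$ be absolutely continuous. For natural $n$ let $x_n:=\sum_{k=1}^{n-1} f\big(\tfrac kn\big)$ and $y_n:=x_{n+1}-x_n$. Then $\lim_{n\to\infty} y_n=\int_0^1 f(x)\,dx$. *)

theory Defs
  imports "HOL-Analysis.Analysis"
begin

definition abs_continuous_on :: "real \<Rightarrow> real \<Rightarrow> (real \<Rightarrow> real) \<Rightarrow> bool" where
  "abs_continuous_on u v f \<longleftrightarrow>
     (\<forall>e>0. \<exists>d>0. \<forall>(n::nat) (a::nat \<Rightarrow> real) (b::nat \<Rightarrow> real).
        (\<forall>i<n. u \<le> a i \<and> a i \<le> b i \<and> b i \<le> v) \<longrightarrow>
        (\<forall>i<n. \<forall>j<n. i \<noteq> j \<longrightarrow> b i \<le> a j \<or> b j \<le> a i) \<longrightarrow>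
        (\<Sum>i<n. b i - a i) < d \<longrightarrow>
        (\<Sum>i<n. \<bar>f (b i) - f (a i)\<bar>) < e)"

definition riemann_x :: "(real \<Rightarrow> real) \<Rightarrow> nat \<Rightarrow> real" where
  "riemann_x f n = (\<Sum>k=1..<n. f (real k / real n))"

end

theory Submission
  imports Defs
begin

text \<open>
  Every absolutely continuous \<open>f\<close> is an indefinite integral: \<open>f y - f x = \<integral>\<^sub>x\<^sup>y g\<close> with \<open>g\<close>
  integrable. This follows from the Jordan decomposition \<open>f = V - (V - f)\<close>, \<open>V\<close> the variation
  function, into two monotone absolutely continuous functions, whose Lebesgue--Stieltjes measures
  are absolutely continuous with respect to Lebesgue measure, so that Radon--Nikodym applies.

  Put \<open>m\<^sub>i = (i + 1) / (n + 1) \<in> [i / n, (i + 1) / n]\<close>. Regrouping the terms gives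
  \<open>x\<^sub>n\<^sub>+\<^sub>1 - x\<^sub>n = R\<^sub>n + (\<Sum>j\<le>n. f (j / n)) / (n + 1)\<close> with
  \<open>R\<^sub>n = \<Sum>i<n. m\<^sub>i (f m\<^sub>i - f (i / n)) - (1 - m\<^sub>i) (f ((i + 1) / n) - f m\<^sub>i)\<close>.
  The second term is a Riemann sum of the continuous \<open>f\<close>. The first is \<open>\<integral> K\<^sub>n g\<close> for a kernel
  \<open>K\<^sub>n\<close> bounded by \<open>1\<close>, supported in \<open>[0, 1]\<close> and of mean zero on every cell
  \<open>(i / n, (i + 1) / n]\<close>, so that its integrals over half-lines are \<open>O(1 / n)\<close>. Half-lines
  generate the Borel sets and simple functions are dense in \<open>L\<^sup>1\<close>, hence \<open>\<integral> K\<^sub>n g \<longrightarrow> 0\<close>.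
\<close>

section \<open>Families of non-overlapping intervals\<close>

text \<open>Finite families of intervals are encoded as sets of endpoint pairs; degenerate and repeated
  intervals, which the indexed families in \<open>abs_continuous_on\<close> allow, contribute nothing.\<close>

definition interval_family :: "real \<Rightarrow> real \<Rightarrow> (real \<times> real) set \<Rightarrow> bool" where
  "interval_family a b S \<longleftrightarrow> finite S \<and> (\<forall>p\<in>S. a \<le> fst p \<and> fst p < snd p \<and> snd p \<le> b) \<and>
     (\<forall>p\<in>S. \<forall>q\<in>S. p \<noteq> q \<longrightarrow> snd p \<le> fst q \<or> snd q \<le> fst p)"

definition total_length :: "(real \<times> real) set \<Rightarrow> real" where
  "total_length S = (\<Sum>p\<in>S. snd p - fst p)"

definition variation_sum :: "(real \<Rightarrow> real) \<Rightarrow> (real \<times> real) set \<Rightarrow> real" where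
  "variation_sum f S = (\<Sum>p\<in>S. \<bar>f (snd p) - f (fst p)\<bar>)"

lemma interval_familyD:
  assumes "interval_family a b S"
  shows "finite S"
    and "\<And>p. p \<in> S \<Longrightarrow> a \<le> fst p \<and> fst p < snd p \<and> snd p \<le> b"
    and "\<And>p q. p \<in> S \<Longrightarrow> q \<in> S \<Longrightarrow> p \<noteq> q \<Longrightarrow> snd p \<le> fst q \<or> snd q \<le> fst p"
  using assms by (auto simp: interval_family_def)

lemma interval_family_empty [simp]: "interval_family a b {}"
  by (simp add: interval_family_def)

lemma interval_family_singleton: "a \<le> x \<Longrightarrow> x < y \<Longrightarrow> y \<le> b \<Longrightarrow> interval_family a b {(x, y)}"
  by (simp add: interval_family_def)

lemma interval_family_mono: "interval_family a b S \<Longrightarrow> a' \<le> a \<Longrightarrow> b \<le> b' \<Longrightarrow> interval_family a' b' S"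
  by (fastforce simp: interval_family_def)

lemma interval_family_Un:
  assumes "interval_family a b S1" "interval_family b c S2" "a \<le> b" "b \<le> c"
  shows "interval_family a c (S1 \<union> S2)" and "S1 \<inter> S2 = {}"
  using interval_familyD[OF assms(1)] interval_familyD[OF assms(2)] assms(3,4)
  unfolding interval_family_def by fastforce+

lemma
  assumes T: "interval_family a b T" and S: "\<And>p. p \<in> T \<Longrightarrow> interval_family (fst p) (snd p) (S p)"
  shows interval_family_UN: "interval_family a b (\<Union>p\<in>T. S p)"
    and sum_interval_family_UN: "(\<Sum>q\<in>(\<Union>p\<in>T. S p). g q) = (\<Sum>p\<in>T. \<Sum>q\<in>S p. g q)"
proof -
  note T = interval_familyD[OF T]
  have finite_S: "finite (S p)" if "p \<in> T" for p
    using interval_familyD(1)[OF S[OF that]] .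
  have in_parent: "fst p \<le> fst q \<and> fst q < snd q \<and> snd q \<le> snd p" if "p \<in> T" "q \<in> S p" for p q
    using interval_familyD(2)[OF S[OF that(1)] that(2)] .
  show "interval_family a b (\<Union>p\<in>T. S p)"
    unfolding interval_family_def
  proof (intro conjI ballI impI)
    show "finite (\<Union>p\<in>T. S p)" using T(1) finite_S by blast
  next
    fix q assume "q \<in> (\<Union>p\<in>T. S p)"
    then obtain p where "p \<in> T" "q \<in> S p" by blast
    then show "a \<le> fst q" "fst q < snd q" "snd q \<le> b"
      using in_parent[of p q] T(2)[of p] by fastforce+
  next
    fix q q' assume "q \<in> (\<Union>p\<in>T. S p)" "q' \<in> (\<Union>p\<in>T. S p)" "q \<noteq> q'"
    then obtain p p' where p: "p \<in> T" "q \<in> S p" and p': "p' \<in> T" "q' \<in> S p'"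
      by blast
    show "snd q \<le> fst q' \<or> snd q' \<le> fst q"
    proof (cases "p = p'")
      case True
      then show ?thesis using interval_familyD(3)[OF S[OF p(1)] p(2)] p'(2) \<open>q \<noteq> q'\<close> by blast
    next
      case False
      then show ?thesis using T(3)[OF p(1) p'(1)] in_parent[OF p] in_parent[OF p'] by auto
    qed
  qed
  have "S p \<inter> S p' = {}" if "p \<in> T" "p' \<in> T" "p \<noteq> p'" for p p'
    using T(3)[OF that] in_parent[OF that(1)] in_parent[OF that(2)] by fastforce
  then show "(\<Sum>q\<in>(\<Union>p\<in>T. S p). g q) = (\<Sum>p\<in>T. \<Sum>q\<in>S p. g q)"
    using T(1) finite_S by (intro sum.UNION_disjoint) auto
qed

definition restrict_family :: "real \<Rightarrow> real \<Rightarrow> (real \<times> real) set \<Rightarrow> (real \<times> real) set" where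
  "restrict_family x y S =
     (\<lambda>p. (max (fst p) x, min (snd p) y)) ` {p \<in> S. max (fst p) x < min (snd p) y}"

lemma interval_family_restrict:
  assumes "interval_family a b S"
  shows "interval_family x y (restrict_family x y S)"
  using interval_familyD[OF assms]
  unfolding interval_family_def restrict_family_def by fastforce

lemma variation_sum_restrict:
  assumes "interval_family a b S"
  shows "variation_sum f (restrict_family x y S) =
    (\<Sum>p\<in>{p \<in> S. max (fst p) x < min (snd p) y}. \<bar>f (min (snd p) y) - f (max (fst p) x)\<bar>)"
proof -
  note S = interval_familyD[OF assms]
  have "inj_on (\<lambda>p. (max (fst p) x, min (snd p) y)) {p \<in> S. max (fst p) x < min (snd p) y}"
  proof (rule inj_onI, rule ccontr)
    fix p q
    assume "p \<in> {p \<in> S. max (fst p) x < min (snd p) y}" "q \<in> {p \<in> S. max (fst p) x < min (snd p) y}"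
      and "(max (fst p) x, min (snd p) y) = (max (fst q) x, min (snd q) y)" "p \<noteq> q"
    then show False using S(3)[of p q] by auto
  qed
  then show ?thesis
    unfolding variation_sum_def restrict_family_def by (simp add: sum.reindex)
qed

lemma variation_sum_split:
  assumes "interval_family a c S" "a \<le> b" "b \<le> c"
  shows "variation_sum f S \<le> variation_sum f (restrict_family a b S) + variation_sum f (restrict_family b c S)"
proof -
  note S = interval_familyD[OF assms(1)]
  let ?t = "\<lambda>x y p. if max (fst p) x < min (snd p) y then \<bar>f (min (snd p) y) - f (max (fst p) x)\<bar> else 0"
  have "variation_sum f S \<le> (\<Sum>p\<in>S. ?t a b p + ?t b c p)"
    unfolding variation_sum_def
  proof (rule sum_mono)
    fix p assume "p \<in> S"
    then have p: "a \<le> fst p" "fst p < snd p" "snd p \<le> c" using S(2) by auto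
    consider "snd p \<le> b" | "b \<le> fst p" | "fst p < b" "b < snd p" by linarith
    then show "\<bar>f (snd p) - f (fst p)\<bar> \<le> ?t a b p + ?t b c p"
      by cases (use p assms(2,3) in \<open>auto simp: max_def min_def abs_if\<close>)
  qed
  also have "\<dots> = variation_sum f (restrict_family a b S) + variation_sum f (restrict_family b c S)"
    using S(1) by (simp add: variation_sum_restrict[OF assms(1)] sum.distrib sum.inter_filter)
  finally show ?thesis .
qed

lemma total_length_eq_measure:
  assumes "interval_family a b S"
  shows "total_length S = measure lebesgue (\<Union>p\<in>S. {fst p..snd p})"
proof -
  note S = interval_familyD[OF assms]
  have "pairwise (\<lambda>p q. negligible ({fst p..snd p} \<inter> {fst q..snd q})) S"
  proof (rule pairwiseI)
    fix p q assume "p \<in> S" "q \<in> S" "p \<noteq> q"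
    then have "{fst p..snd p} \<inter> {fst q..snd q} \<subseteq> {snd p, fst p}"
      using S(3) by fastforce
    then show "negligible ({fst p..snd p} \<inter> {fst q..snd q})"
      by (rule negligible_subset[rotated]) simp
  qed
  then have "measure lebesgue (\<Union>p\<in>S. {fst p..snd p}) = (\<Sum>p\<in>S. measure lebesgue {fst p..snd p})"
    by (intro measure_negligible_finite_Union_image S(1)) auto
  also have "\<dots> = total_length S"
    unfolding total_length_def by (intro sum.cong refl) (use S(2) in fastforce)
  finally show ?thesis by simp
qed

lemma total_length_le:
  assumes "interval_family a b S" "a \<le> b"
  shows "total_length S \<le> b - a"
proof -
  note S = interval_familyD[OF assms(1)]
  have "total_length S \<le> measure lebesgue {a..b}"
    unfolding total_length_eq_measure[OF assms(1)]
    by (intro measure_mono_fmeasurable) (use S in fastforce)+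
  then show ?thesis using assms(2) by simp
qed

lemma interval_family_of_indexed:
  fixes l r :: "nat \<Rightarrow> real"
  assumes lr: "\<forall>i<n. a \<le> l i \<and> l i \<le> r i \<and> r i \<le> b"
    and disj: "\<forall>i<n. \<forall>j<n. i \<noteq> j \<longrightarrow> r i \<le> l j \<or> r j \<le> l i"
  obtains S where "interval_family a b S" "total_length S = (\<Sum>i<n. r i - l i)"
    "variation_sum f S = (\<Sum>i<n. \<bar>f (r i) - f (l i)\<bar>)"
proof -
  define I where "I = {i. i < n \<and> l i < r i}"
  have inj: "inj_on (\<lambda>i. (l i, r i)) I"
    by (rule inj_onI) (use disj in \<open>fastforce simp: I_def\<close>)
  have "finite I" by (simp add: I_def)
  then have F: "interval_family a b ((\<lambda>i. (l i, r i)) ` I)"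
    unfolding interval_family_def using lr disj by (auto simp: I_def)
  have eq: "(\<Sum>i<n. g (l i) (r i)) = (\<Sum>p\<in>(\<lambda>i. (l i, r i)) ` I. g (fst p) (snd p))"
    if g0: "\<And>x. g x x = 0" for g :: "real \<Rightarrow> real \<Rightarrow> real"
  proof -
    have "g (l i) (r i) = 0" if "i \<in> {..<n} - I" for i
    proof -
      have "l i = r i" using lr that by (force simp: I_def)
      then show ?thesis by (simp add: g0)
    qed
    then have "(\<Sum>i<n. g (l i) (r i)) = (\<Sum>i\<in>I. g (l i) (r i))"
      by (intro sum.mono_neutral_right) (auto simp: I_def)
    then show ?thesis by (simp add: sum.reindex[OF inj])
  qed
  show ?thesis
    using that[OF F] eq[of "\<lambda>x y. y - x"] eq[of "\<lambda>x y. \<bar>f y - f x\<bar>"]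
    unfolding total_length_def variation_sum_def by simp
qed

lemma indexed_of_interval_family:
  assumes "interval_family a b S"
  obtains l r :: "nat \<Rightarrow> real"
  where "\<forall>i<card S. a \<le> l i \<and> l i \<le> r i \<and> r i \<le> b"
    "\<forall>i<card S. \<forall>j<card S. i \<noteq> j \<longrightarrow> r i \<le> l j \<or> r j \<le> l i"
    "total_length S = (\<Sum>i<card S. r i - l i)"
    "variation_sum f S = (\<Sum>i<card S. \<bar>f (r i) - f (l i)\<bar>)"
proof -
  note S = interval_familyD[OF assms]
  obtain h where h: "bij_betw h {..<card S} S"
    using S(1) ex_bij_betw_nat_finite lessThan_atLeast0 by metis
  have sums: "(\<Sum>p\<in>S. g p) = (\<Sum>i<card S. g (h i))" for g :: "real \<times> real \<Rightarrow> real"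
    using sum.reindex_bij_betw[OF h] by metis
  have mem: "h i \<in> S" if "i < card S" for i
    using h that by (auto dest: bij_betwE)
  have distinct: "h i \<noteq> h j" if "i < card S" "j < card S" "i \<noteq> j" for i j
    using h that by (auto dest: bij_betw_imp_inj_on inj_onD)
  show ?thesis
  proof (rule that)
    show "\<forall>i<card S. a \<le> fst (h i) \<and> fst (h i) \<le> snd (h i) \<and> snd (h i) \<le> b"
      using S(2) mem by (meson less_le_not_le)
    show "\<forall>i<card S. \<forall>j<card S. i \<noteq> j \<longrightarrow> snd (h i) \<le> fst (h j) \<or> snd (h j) \<le> fst (h i)"
      using S(3) mem distinct by blast
  qed (simp_all add: total_length_def variation_sum_def sums)
qed

lemma abs_continuous_onE:
  assumes "abs_continuous_on a b f" "e > 0"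
  obtains d where "d > 0"
    "\<And>S. interval_family a b S \<Longrightarrow> total_length S < d \<Longrightarrow> variation_sum f S < e"
proof -
  obtain d where "d > 0" and d: "\<forall>(n::nat) l r. (\<forall>i<n. a \<le> l i \<and> l i \<le> r i \<and> r i \<le> b) \<longrightarrow>
      (\<forall>i<n. \<forall>j<n. i \<noteq> j \<longrightarrow> r i \<le> l j \<or> r j \<le> l i) \<longrightarrow>
      (\<Sum>i<n. r i - l i) < d \<longrightarrow> (\<Sum>i<n. \<bar>f (r i) - f (l i)\<bar>) < e"
    using assms(1)[unfolded abs_continuous_on_def, rule_format, OF assms(2)] by (elim exE conjE) (rule that)
  have "variation_sum f S < e" if S: "interval_family a b S" and len: "total_length S < d" for S
  proof -
    obtain l r where lr: "\<forall>i<card S. a \<le> l i \<and> l i \<le> r i \<and> r i \<le> b"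
      "\<forall>i<card S. \<forall>j<card S. i \<noteq> j \<longrightarrow> r i \<le> l j \<or> r j \<le> l i"
      "total_length S = (\<Sum>i<card S. r i - l i)"
      "variation_sum f S = (\<Sum>i<card S. \<bar>f (r i) - f (l i)\<bar>)"
      using indexed_of_interval_family[OF S] by blast
    have "(\<Sum>i<card S. \<bar>f (r i) - f (l i)\<bar>) < e"
      by (rule d[rule_format]) (use lr len in auto)
    then show ?thesis using lr(4) by simp
  qed
  with \<open>d > 0\<close> show ?thesis using that by blast
qed

lemma abs_continuous_onI:
  assumes "\<And>e. e > 0 \<Longrightarrow> \<exists>d>0. \<forall>S. interval_family a b S \<longrightarrow> total_length S < d \<longrightarrow> variation_sum f S < e"
  shows "abs_continuous_on a b f"
  unfolding abs_continuous_on_def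
proof (intro allI impI)
  fix e :: real assume "e > 0"
  then obtain d where "d > 0"
    and d: "\<And>S. interval_family a b S \<Longrightarrow> total_length S < d \<Longrightarrow> variation_sum f S < e"
    using assms by blast
  have "\<forall>(n::nat) l r. (\<forall>i<n. a \<le> l i \<and> l i \<le> r i \<and> r i \<le> b) \<longrightarrow>
      (\<forall>i<n. \<forall>j<n. i \<noteq> j \<longrightarrow> r i \<le> l j \<or> r j \<le> l i) \<longrightarrow>
      (\<Sum>i<n. r i - l i) < d \<longrightarrow> (\<Sum>i<n. \<bar>f (r i) - f (l i)\<bar>) < e"
  proof (intro allI impI)
    fix n :: nat and l r :: "nat \<Rightarrow> real"
    assume lr: "\<forall>i<n. a \<le> l i \<and> l i \<le> r i \<and> r i \<le> b"
      "\<forall>i<n. \<forall>j<n. i \<noteq> j \<longrightarrow> r i \<le> l j \<or> r j \<le> l i"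
      and len: "(\<Sum>i<n. r i - l i) < d"
    obtain S where "interval_family a b S" "total_length S = (\<Sum>i<n. r i - l i)"
      "variation_sum f S = (\<Sum>i<n. \<bar>f (r i) - f (l i)\<bar>)"
      using interval_family_of_indexed[OF lr] by blast
    then show "(\<Sum>i<n. \<bar>f (r i) - f (l i)\<bar>) < e" using d len by fastforce
  qed
  with \<open>d > 0\<close> show "\<exists>d>0. \<forall>(n::nat) l r. (\<forall>i<n. a \<le> l i \<and> l i \<le> r i \<and> r i \<le> b) \<longrightarrow>
      (\<forall>i<n. \<forall>j<n. i \<noteq> j \<longrightarrow> r i \<le> l j \<or> r j \<le> l i) \<longrightarrow>
      (\<Sum>i<n. r i - l i) < d \<longrightarrow> (\<Sum>i<n. \<bar>f (r i) - f (l i)\<bar>) < e"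
    by blast
qed

lemma abs_continuous_on_imp_continuous_on:
  assumes "abs_continuous_on a b f"
  shows "continuous_on {a..b} f"
  unfolding continuous_on_iff
proof (intro ballI allI impI)
  fix x e :: real assume x: "x \<in> {a..b}" and "e > 0"
  obtain d where "d > 0"
    and d: "\<And>S. interval_family a b S \<Longrightarrow> total_length S < d \<Longrightarrow> variation_sum f S < e"
    using abs_continuous_onE[OF assms \<open>e > 0\<close>] by blast
  have close: "\<bar>f z - f y\<bar> < e" if "a \<le> y" "y < z" "z \<le> b" "z - y < d" for y z
    using d[OF interval_family_singleton[OF that(1-3)]] that(4)
    by (simp add: total_length_def variation_sum_def)
  have "dist (f y) (f x) < e" if "y \<in> {a..b}" "dist y x < d" for y
    using close[of x y] close[of y x] x that \<open>e > 0\<close>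
    by (cases y x rule: linorder_cases) (auto simp: dist_real_def abs_minus_commute)
  with \<open>d > 0\<close> show "\<exists>d>0. \<forall>y\<in>{a..b}. dist y x < d \<longrightarrow> dist (f y) (f x) < e"
    by blast
qed

lemma abs_continuous_on_subinterval:
  assumes "abs_continuous_on a b f" "a \<le> x" "y \<le> b"
  shows "abs_continuous_on x y f"
proof (rule abs_continuous_onI)
  fix e :: real assume "e > 0"
  then obtain d where "d > 0"
    and "\<And>S. interval_family a b S \<Longrightarrow> total_length S < d \<Longrightarrow> variation_sum f S < e"
    using abs_continuous_onE[OF assms(1)] by blast
  then show "\<exists>d>0. \<forall>S. interval_family x y S \<longrightarrow> total_length S < d \<longrightarrow> variation_sum f S < e"
    using assms(2,3) by (metis interval_family_mono)
qed

lemma abs_continuous_on_cong: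
  assumes "abs_continuous_on a b f" "\<And>x. a \<le> x \<Longrightarrow> x \<le> b \<Longrightarrow> g x = f x"
  shows "abs_continuous_on a b g"
proof (rule abs_continuous_onI)
  fix e :: real assume "e > 0"
  then obtain d where "d > 0"
    and d: "\<And>S. interval_family a b S \<Longrightarrow> total_length S < d \<Longrightarrow> variation_sum f S < e"
    using abs_continuous_onE[OF assms(1)] by blast
  have "variation_sum g S = variation_sum f S" if "interval_family a b S" for S
    unfolding variation_sum_def
    by (intro sum.cong refl) (use interval_familyD(2)[OF that] assms(2) in force)
  with \<open>d > 0\<close> d show "\<exists>d>0. \<forall>S. interval_family a b S \<longrightarrow> total_length S < d \<longrightarrow> variation_sum g S < e"
    by auto
qed

lemma abs_continuous_on_diff:
  assumes "abs_continuous_on a b f" "abs_continuous_on a b g"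
  shows "abs_continuous_on a b (\<lambda>x. f x - g x)"
proof (rule abs_continuous_onI)
  fix e :: real assume "e > 0"
  then have "e / 2 > 0" by simp
  obtain d1 where "d1 > 0"
    and d1: "\<And>S. interval_family a b S \<Longrightarrow> total_length S < d1 \<Longrightarrow> variation_sum f S < e / 2"
    using abs_continuous_onE[OF assms(1) \<open>e / 2 > 0\<close>] by blast
  obtain d2 where "d2 > 0"
    and d2: "\<And>S. interval_family a b S \<Longrightarrow> total_length S < d2 \<Longrightarrow> variation_sum g S < e / 2"
    using abs_continuous_onE[OF assms(2) \<open>e / 2 > 0\<close>] by blast
  have tri: "variation_sum (\<lambda>x. f x - g x) S \<le> variation_sum f S + variation_sum g S" for S
    unfolding variation_sum_def sum.distrib[symmetric] by (rule sum_mono) linarith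
  have "variation_sum (\<lambda>x. f x - g x) S < e"
    if S: "interval_family a b S" and "total_length S < min d1 d2" for S
  proof -
    have "total_length S < d1" "total_length S < d2" using that(2) by auto
    then show ?thesis using tri[of S] d1[OF S] d2[OF S] by linarith
  qed
  then have "\<forall>S. interval_family a b S \<longrightarrow> total_length S < min d1 d2 \<longrightarrow>
      variation_sum (\<lambda>x. f x - g x) S < e"
    by blast
  with \<open>d1 > 0\<close> \<open>d2 > 0\<close> show "\<exists>d>0. \<forall>S. interval_family a b S \<longrightarrow> total_length S < d \<longrightarrow>
      variation_sum (\<lambda>x. f x - g x) S < e"
    by (intro exI[of _ "min d1 d2"]) simp
qed

section \<open>Total variation\<close>

lemma variation_sum_bounded:
  assumes "abs_continuous_on a b f" "a \<le> b"
  obtains B where "\<And>S. interval_family a b S \<Longrightarrow> variation_sum f S \<le> B"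
proof -
  obtain d where "d > 0"
    and d: "\<And>S. interval_family a b S \<Longrightarrow> total_length S < d \<Longrightarrow> variation_sum f S < 1"
    using abs_continuous_onE[OF assms(1), of 1] by auto
  obtain N :: nat where N: "(b - a) / d < real N"
    using reals_Archimedean2 by blast
  moreover have "0 \<le> (b - a) / d" using \<open>d > 0\<close> assms(2) by simp
  ultimately have "N > 0" by linarith
  then have "(b - a) / N < d"
    using N \<open>d > 0\<close> by (simp add: field_simps)
  define t where "t m = a + real m * (b - a) / N" for m
  have step: "t m \<le> t (Suc m)" "t (Suc m) - t m = (b - a) / N" for m
    using assms(2) \<open>N > 0\<close> by (auto simp: t_def field_simps)
  have "variation_sum f S \<le> m" if "m \<le> N" "interval_family a (t m) S" for m S
    using that
  proof (induction m arbitrary: S)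
    case 0
    then have "S = {}" using interval_familyD(2)[OF "0.prems"(2)] by (fastforce simp: t_def)
    then show ?case by (simp add: variation_sum_def)
  next
    case (Suc m)
    have "real (Suc m) * (b - a) \<le> real N * (b - a)"
      using Suc.prems(1) assms(2) by (intro mult_right_mono) auto
    then have "t (Suc m) \<le> b"
      using \<open>N > 0\<close> by (simp add: t_def field_simps)
    moreover have "a \<le> t m"
      using assms(2) by (simp add: t_def)
    ultimately have "interval_family a b (restrict_family (t m) (t (Suc m)) S)"
      using interval_family_mono[OF interval_family_restrict[OF Suc.prems(2)]] by blast
    moreover have "total_length (restrict_family (t m) (t (Suc m)) S) < d"
      using total_length_le[OF interval_family_restrict[OF Suc.prems(2)] step(1)[of m]] step(2)[of m]
        \<open>(b - a) / N < d\<close> by linarith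
    ultimately have "variation_sum f (restrict_family (t m) (t (Suc m)) S) < 1"
      by (rule d)
    moreover have "variation_sum f (restrict_family a (t m) S) \<le> m"
      using Suc.IH Suc.prems(1) interval_family_restrict[OF Suc.prems(2)] by simp
    moreover have "variation_sum f S \<le> variation_sum f (restrict_family a (t m) S)
        + variation_sum f (restrict_family (t m) (t (Suc m)) S)"
      using variation_sum_split[OF Suc.prems(2) \<open>a \<le> t m\<close> step(1)[of m]] .
    ultimately show ?case by simp
  qed
  moreover have "t N = b" using \<open>N > 0\<close> by (simp add: t_def)
  ultimately show ?thesis using that[of N] by simp
qed

definition variation :: "(real \<Rightarrow> real) \<Rightarrow> real \<Rightarrow> real \<Rightarrow> real" where
  "variation f x y = (SUP S\<in>{S. interval_family x y S}. variation_sum f S)"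

lemma bdd_above_variation_sum:
  assumes "abs_continuous_on a b f" "a \<le> x" "x \<le> y" "y \<le> b"
  shows "bdd_above (variation_sum f ` {S. interval_family x y S})"
proof -
  obtain B where "\<And>S. interval_family a b S \<Longrightarrow> variation_sum f S \<le> B"
    using variation_sum_bounded[OF assms(1)] assms(2-4) by (metis order.trans)
  then show ?thesis
    using assms(2,4) by (auto intro!: bdd_aboveI2 intro: interval_family_mono)
qed

lemma variation_sum_le_variation:
  assumes "abs_continuous_on a b f" "a \<le> x" "x \<le> y" "y \<le> b" "interval_family x y S"
  shows "variation_sum f S \<le> variation f x y"
  unfolding variation_def
  using bdd_above_variation_sum[OF assms(1-4)] assms(5) by (auto intro: cSUP_upper)

lemma variation_le:
  "(\<And>S. interval_family x y S \<Longrightarrow> variation_sum f S \<le> c) \<Longrightarrow> variation f x y \<le> c"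
  unfolding variation_def by (rule cSUP_least) (use interval_family_empty in blast)+

lemma exists_variation_sum_gt:
  assumes "abs_continuous_on a b f" "a \<le> x" "x \<le> y" "y \<le> b" "\<eta> > 0"
  obtains S where "interval_family x y S" "variation f x y - \<eta> < variation_sum f S"
proof -
  have "variation f x y - \<eta> < variation f x y" using assms(5) by simp
  then show ?thesis
    using that less_cSUP_iff[OF _ bdd_above_variation_sum[OF assms(1-4)]] interval_family_empty
    unfolding variation_def by blast
qed

lemma abs_le_variation:
  assumes "abs_continuous_on a b f" "a \<le> x" "x \<le> y" "y \<le> b"
  shows "\<bar>f y - f x\<bar> \<le> variation f x y"
proof (cases "x = y")
  case True
  then show ?thesis
    using variation_sum_le_variation[OF assms interval_family_empty] by (simp add: variation_sum_def)
next
  case False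
  then have "interval_family x y {(x, y)}" using assms(3) by (simp add: interval_family_singleton)
  from variation_sum_le_variation[OF assms this] show ?thesis by (simp add: variation_sum_def)
qed

lemma variation_additive:
  assumes "abs_continuous_on a c f" "a \<le> b" "b \<le> c"
  shows "variation f a c = variation f a b + variation f b c"
proof (rule antisym)
  show "variation f a c \<le> variation f a b + variation f b c"
  proof (rule variation_le)
    fix S assume S: "interval_family a c S"
    have "variation_sum f (restrict_family a b S) \<le> variation f a b"
      "variation_sum f (restrict_family b c S) \<le> variation f b c"
      using assms interval_family_restrict[OF S]
      by (auto intro!: variation_sum_le_variation[OF assms(1)])
    then show "variation_sum f S \<le> variation f a b + variation f b c"
      using variation_sum_split[OF S assms(2,3), where f = f] by linarith
  qed
  have "variation_sum f S1 + variation_sum f S2 \<le> variation f a c"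
    if S1: "interval_family a b S1" and S2: "interval_family b c S2" for S1 S2
  proof -
    note U = interval_family_Un[OF S1 S2 assms(2,3)]
    have "variation_sum f (S1 \<union> S2) = variation_sum f S1 + variation_sum f S2"
      unfolding variation_sum_def
      using U(2) interval_familyD(1)[OF S1] interval_familyD(1)[OF S2] by (rule sum.union_disjoint[rotated 2])
    then show ?thesis
      using variation_sum_le_variation[OF assms(1) order_refl _ order_refl U(1)] assms(2,3) by simp
  qed
  then have "variation f a b \<le> variation f a c - variation_sum f S2" if "interval_family b c S2" for S2
    using that by (intro variation_le) (simp add: algebra_simps)
  then have "variation f b c \<le> variation f a c - variation f a b"
    by (intro variation_le) (simp add: algebra_simps)
  then show "variation f a b + variation f b c \<le> variation f a c" by simp
qed

lemma
  assumes "abs_continuous_on a b f"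
  shows mono_on_variation: "mono_on {a..b} (variation f a)"
    and mono_on_variation_diff: "mono_on {a..b} (\<lambda>x. variation f a x - f x)"
proof -
  have "variation f a x + \<bar>f y - f x\<bar> \<le> variation f a y"
    if "x \<in> {a..b}" "y \<in> {a..b}" "x \<le> y" for x y
  proof -
    have "abs_continuous_on a y f"
      using abs_continuous_on_subinterval[OF assms] that by simp
    then have "variation f a y = variation f a x + variation f x y"
      using that by (intro variation_additive) auto
    moreover have "\<bar>f y - f x\<bar> \<le> variation f x y"
      using abs_le_variation[OF assms] that by simp
    ultimately show ?thesis by simp
  qed
  then show "mono_on {a..b} (variation f a)" "mono_on {a..b} (\<lambda>x. variation f a x - f x)"
    by (auto intro!: mono_onI dest!: abs_le_D1 simp: abs_le_iff) fastforce+
qed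

lemma exists_family_approximating_sum_variation:
  assumes "abs_continuous_on a b f" "interval_family a b T" "\<eta> > 0"
  obtains U where "interval_family a b U" "total_length U \<le> total_length T"
    "(\<Sum>p\<in>T. variation f (fst p) (snd p)) < variation_sum f U + \<eta>"
proof -
  note T = interval_familyD[OF assms(2)]
  define \<eta>' where "\<eta>' = \<eta> / (card T + 1)"
  have "\<eta>' > 0" using assms(3) by (simp add: \<eta>'_def)
  have "\<exists>S. interval_family (fst p) (snd p) S \<and> variation f (fst p) (snd p) - \<eta>' < variation_sum f S"
    if "p \<in> T" for p
    using exists_variation_sum_gt[OF assms(1) _ _ _ \<open>\<eta>' > 0\<close>] T(2)[OF that] by (metis less_imp_le)
  then obtain S where S: "\<And>p. p \<in> T \<Longrightarrow> interval_family (fst p) (snd p) (S p)"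
    and S_gt: "\<And>p. p \<in> T \<Longrightarrow> variation f (fst p) (snd p) - \<eta>' < variation_sum f (S p)"
    by metis
  note sum_U = sum_interval_family_UN[OF assms(2) S]
  have "total_length (\<Union>p\<in>T. S p) = (\<Sum>p\<in>T. total_length (S p))"
    unfolding total_length_def by (rule sum_U)
  also have "\<dots> \<le> (\<Sum>p\<in>T. snd p - fst p)"
    using S T(2) by (intro sum_mono total_length_le) (auto intro: less_imp_le)
  also have "\<dots> = total_length T"
    by (simp add: total_length_def)
  finally have "total_length (\<Union>p\<in>T. S p) \<le> total_length T" .
  moreover have "(\<Sum>p\<in>T. variation f (fst p) (snd p)) \<le> (\<Sum>p\<in>T. variation_sum f (S p) + \<eta>')"
    using S_gt by (intro sum_mono) (metis diff_less_eq less_imp_le)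
  moreover have "(\<Sum>p\<in>T. variation_sum f (S p) + \<eta>') = variation_sum f (\<Union>p\<in>T. S p) + card T * \<eta>'"
    by (simp add: sum.distrib variation_sum_def sum_U)
  moreover have "card T * \<eta>' < \<eta>"
    using assms(3) by (simp add: \<eta>'_def field_simps)
  ultimately show ?thesis
    using that[OF interval_family_UN[OF assms(2) S]] by linarith
qed

lemma abs_continuous_on_variation:
  assumes "abs_continuous_on a b f"
  shows "abs_continuous_on a b (variation f a)"
proof (rule abs_continuous_onI)
  fix e :: real assume "e > 0"
  then obtain d where "d > 0"
    and d: "\<And>S. interval_family a b S \<Longrightarrow> total_length S < d \<Longrightarrow> variation_sum f S < e / 2"
    using abs_continuous_onE[OF assms, of "e / 2"] by auto
  have "variation_sum (variation f a) T < e" if T: "interval_family a b T" "total_length T < d" for T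
  proof -
    have increment: "\<bar>variation f a (snd p) - variation f a (fst p)\<bar> = variation f (fst p) (snd p)"
      if "p \<in> T" for p
    proof -
      have p: "a \<le> fst p" "fst p \<le> snd p" "snd p \<le> b"
        using interval_familyD(2)[OF T(1) that] by auto
      then have "variation f a (snd p) = variation f a (fst p) + variation f (fst p) (snd p)"
        using abs_continuous_on_subinterval[OF assms order_refl p(3)] by (intro variation_additive) auto
      moreover have "0 \<le> variation f (fst p) (snd p)"
        using abs_le_variation[OF assms p] by linarith
      ultimately show ?thesis by simp
    qed
    have "(\<Sum>p\<in>T. variation f (fst p) (snd p)) \<le> e / 2"
    proof (rule field_le_epsilon)
      fix \<eta> :: real assume "\<eta> > 0"
      then obtain U where "interval_family a b U" "total_length U \<le> total_length T"
        "(\<Sum>p\<in>T. variation f (fst p) (snd p)) < variation_sum f U + \<eta>"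
        using exists_family_approximating_sum_variation[OF assms T(1)] by blast
      then show "(\<Sum>p\<in>T. variation f (fst p) (snd p)) \<le> e / 2 + \<eta>"
        using d[of U] T(2) by fastforce
    qed
    then show ?thesis
      using \<open>e > 0\<close> increment by (simp add: variation_sum_def)
  qed
  with \<open>d > 0\<close> show "\<exists>d>0. \<forall>T. interval_family a b T \<longrightarrow> total_length T < d \<longrightarrow>
      variation_sum (variation f a) T < e"
    by blast
qed

section \<open>Absolutely continuous functions are indefinite integrals\<close>

definition has_density_on :: "(real \<Rightarrow> real) \<Rightarrow> real \<Rightarrow> real \<Rightarrow> (real \<Rightarrow> real) \<Rightarrow> bool" where
  "has_density_on f a b g \<longleftrightarrow> integrable lborel g \<and>
     (\<forall>x y. a \<le> x \<longrightarrow> x \<le> y \<longrightarrow> y \<le> b \<longrightarrow> f y - f x = (LINT t:{x<..y}|lborel. g t))"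

lemma has_density_on_diff:
  assumes "has_density_on f a b g" "has_density_on h a b k"
  shows "has_density_on (\<lambda>x. f x - h x) a b (\<lambda>x. g x - k x)"
  unfolding has_density_on_def
proof (intro conjI allI impI)
  show "integrable lborel (\<lambda>x. g x - k x)"
    using assms by (simp add: has_density_on_def)
  fix x y assume "a \<le> x" "x \<le> y" "y \<le> b"
  then have "f y - f x = (LINT t:{x<..y}|lborel. g t)" "h y - h x = (LINT t:{x<..y}|lborel. k t)"
    using assms by (auto simp: has_density_on_def)
  moreover have "set_integrable lborel {x<..y} u" if "integrable lborel u" for u :: "real \<Rightarrow> real"
    using integrable_mult_indicator[OF _ that, of "{x<..y}"] by (simp add: set_integrable_def)
  ultimately show "f y - h y - (f x - h x) = (LINT t:{x<..y}|lborel. g t - k t)"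
    using assms by (simp add: has_density_on_def)
qed

lemma emeasure_countable_Union_le:
  assumes "countable \<D>" "\<D> \<subseteq> sets M"
    and finite_le: "\<And>\<G>. finite \<G> \<Longrightarrow> \<G> \<subseteq> \<D> \<Longrightarrow> emeasure M (\<Union>\<G>) \<le> c"
  shows "emeasure M (\<Union>\<D>) \<le> c"
proof (cases "\<D> = {}")
  case True
  then show ?thesis by simp
next
  case False
  define A where "A n = \<Union>(from_nat_into \<D> ` {..<n})" for n
  have "range A \<subseteq> sets M"
    using assms(2) from_nat_into[OF False] by (auto simp: A_def)
  moreover have "incseq A"
    unfolding A_def incseq_def by (fastforce intro: less_le_trans)
  ultimately have "(SUP n. emeasure M (A n)) = emeasure M (\<Union>n. A n)"
    by (rule SUP_emeasure_incseq)
  also have "(\<Union>n. A n) = (\<Union>i. from_nat_into \<D> i)"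
    unfolding A_def by blast
  also have "\<dots> = \<Union>\<D>"
    using range_from_nat_into[OF False assms(1)] by simp
  finally have "emeasure M (\<Union>\<D>) = (SUP n. emeasure M (A n))" ..
  also have "\<dots> \<le> c"
    unfolding A_def using from_nat_into[OF False] by (intro SUP_least finite_le) auto
  finally show ?thesis .
qed

lemma interval_measure_null_outside:
  assumes mono: "mono F" and cont: "continuous_on UNIV F"
    and below: "\<And>x. x \<le> a \<Longrightarrow> F x = F a" and above: "\<And>x. b \<le> x \<Longrightarrow> F x = F b"
  shows "UNIV - {a<..b} \<in> null_sets (interval_measure F)"
proof -
  have Ioc: "emeasure (interval_measure F) {x<..y} = F y - F x" if "x \<le> y" for x y
    using that mono cont
    by (intro emeasure_interval_measure_Ioc) (auto simp: mono_def continuous_on_eq_continuous_within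
        intro: continuous_within_subset)
  have "{..a} = (\<Union>k::nat. {a - k<..a})"
  proof (intro equalityI subsetI)
    fix x assume "x \<in> {..a}"
    obtain k :: nat where "a - x < k" using reals_Archimedean2 by blast
    with \<open>x \<in> {..a}\<close> have "x \<in> {a - k<..a}" by simp
    then show "x \<in> (\<Union>k::nat. {a - k<..a})" by blast
  qed auto
  also have "\<dots> \<in> null_sets (interval_measure F)"
  proof (intro null_sets_UN null_setsI)
    show "emeasure (interval_measure F) {a - real k<..a} = 0" for k
      using Ioc[of "a - real k" a] below[of "a - real k"] by simp
  qed simp
  finally have "{..a} \<in> null_sets (interval_measure F)" .
  have "{b<..} = (\<Union>k::nat. {b<..b + k})"
  proof (intro equalityI subsetI)
    fix x assume "x \<in> {b<..}"
    obtain k :: nat where "x - b < k" using reals_Archimedean2 by blast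
    with \<open>x \<in> {b<..}\<close> have "x \<in> {b<..b + k}" by simp
    then show "x \<in> (\<Union>k::nat. {b<..b + k})" by blast
  qed auto
  also have "\<dots> \<in> null_sets (interval_measure F)"
  proof (intro null_sets_UN null_setsI)
    show "emeasure (interval_measure F) {b<..b + real k} = 0" for k
      using Ioc[of b "b + real k"] above[of "b + real k"] by simp
  qed simp
  finally have "{b<..} \<in> null_sets (interval_measure F)" .
  moreover have "UNIV - {a<..b} = {..a} \<union> {b<..}" by auto
  ultimately show ?thesis using \<open>{..a} \<in> null_sets (interval_measure F)\<close> by (simp add: null_sets.Un)
qed

lemma disjoint_open_intervals_imp_le:
  fixes x y u v :: real
  assumes "x < y" "u < v" "{x<..<y} \<inter> {u<..<v} = {}"
  shows "y \<le> u \<or> v \<le> x"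
proof (rule ccontr)
  assume "\<not> (y \<le> u \<or> v \<le> x)"
  then have "(max x u + min y v) / 2 \<in> {x<..<y} \<inter> {u<..<v}"
    using assms(1,2) by auto
  with assms(3) show False by blast
qed

lemma interval_family_of_closed_intervals:
  fixes \<G> :: "real set set"
  assumes "finite \<G>"
    and intervals: "\<And>K. K \<in> \<G> \<Longrightarrow> \<exists>x y. K = {x..y} \<and> a \<le> x \<and> x \<le> y \<and> y \<le> b"
    and disjoint: "pairwise (\<lambda>K L. interior K \<inter> interior L = {}) \<G>"
  obtains S where "interval_family a b S" "total_length S \<le> measure lebesgue (\<Union>\<G>)"
    "\<And>g :: real \<Rightarrow> real \<Rightarrow> real. (\<And>x. g x x = 0) \<Longrightarrow>
      (\<Sum>K\<in>\<G>. g (Inf K) (Sup K)) = (\<Sum>p\<in>S. g (fst p) (snd p))"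
proof -
  have K: "K = {Inf K..Sup K}" "a \<le> Inf K" "Inf K \<le> Sup K" "Sup K \<le> b" if "K \<in> \<G>" for K
    using intervals[OF that] by auto
  define \<G>' where "\<G>' = {K \<in> \<G>. Inf K < Sup K}"
  define S where "S = (\<lambda>K. (Inf K, Sup K)) ` \<G>'"
  have inj: "inj_on (\<lambda>K. (Inf K, Sup K)) \<G>'"
    by (rule inj_onI) (metis (no_types, lifting) K(1) \<G>'_def mem_Collect_eq prod.inject)
  have family: "interval_family a b S"
    unfolding interval_family_def
  proof (intro conjI ballI impI)
    show "finite S" using \<open>finite \<G>\<close> by (simp add: S_def \<G>'_def)
  next
    fix p assume "p \<in> S"
    then show "a \<le> fst p" "fst p < snd p" "snd p \<le> b"
      using K by (auto simp: S_def \<G>'_def)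
  next
    fix p q assume "p \<in> S" "q \<in> S" "p \<noteq> q"
    then obtain K L where KL: "K \<in> \<G>'" "L \<in> \<G>'" "K \<noteq> L" "p = (Inf K, Sup K)" "q = (Inf L, Sup L)"
      by (auto simp: S_def)
    then have "interior K \<inter> interior L = {}"
      using disjoint by (auto simp: \<G>'_def pairwise_def)
    then have "{Inf K<..<Sup K} \<inter> {Inf L<..<Sup L} = {}"
      using KL K by (metis (no_types, lifting) \<G>'_def interior_atLeastAtMost_real mem_Collect_eq)
    then show "snd p \<le> fst q \<or> snd q \<le> fst p"
      using KL disjoint_open_intervals_imp_le by (simp add: \<G>'_def)
  qed
  have "{Inf K..Sup K} = K" if "K \<in> \<G>'" for K
    using that unfolding \<G>'_def by (metis (mono_tags) K(1) mem_Collect_eq)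
  then have "total_length S = measure lebesgue (\<Union>\<G>')"
    unfolding total_length_eq_measure[OF family] by (simp add: S_def)
  also have "\<dots> \<le> measure lebesgue (\<Union>\<G>)"
  proof (rule measure_mono_fmeasurable)
    have "K \<in> lmeasurable" if "K \<in> \<G>" for K
      using K[OF that] by (metis lmeasurable_cbox cbox_interval)
    then show "\<Union>\<G> \<in> lmeasurable" "\<Union>\<G>' \<in> sets lebesgue"
      using \<open>finite \<G>\<close> by (auto simp: \<G>'_def)
  qed (auto simp: \<G>'_def)
  finally have "total_length S \<le> measure lebesgue (\<Union>\<G>)" .
  moreover have "(\<Sum>K\<in>\<G>. g (Inf K) (Sup K)) = (\<Sum>p\<in>S. g (fst p) (snd p))"
    if "\<And>x. g x x = 0" for g :: "real \<Rightarrow> real \<Rightarrow> real"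
  proof -
    have "(\<Sum>K\<in>\<G>. g (Inf K) (Sup K)) = (\<Sum>K\<in>\<G>'. g (Inf K) (Sup K))"
    proof (rule sum.mono_neutral_right)
      show "\<forall>K\<in>\<G> - \<G>'. g (Inf K) (Sup K) = 0"
        using K(3) that by (force simp: \<G>'_def)
    qed (use \<open>finite \<G>\<close> in \<open>auto simp: \<G>'_def\<close>)
    then show ?thesis
      by (simp add: S_def sum.reindex[OF inj])
  qed
  ultimately show ?thesis
    using that[OF family] by blast
qed

lemma interval_measure_Union_intervals_le:
  assumes mono: "mono F" and cont: "continuous_on UNIV F"
    and small: "\<And>S. interval_family a b S \<Longrightarrow> total_length S < d \<Longrightarrow> variation_sum F S < e"
    and "finite \<G>"
    and intervals: "\<And>K. K \<in> \<G> \<Longrightarrow> \<exists>x y. K = {x..y} \<and> a \<le> x \<and> x \<le> y \<and> y \<le> b"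
    and disjoint: "pairwise (\<lambda>K L. interior K \<inter> interior L = {}) \<G>"
    and measure_less: "measure lebesgue (\<Union>\<G>) < d"
  shows "emeasure (interval_measure F) (\<Union>\<G>) \<le> e"
proof -
  obtain S where S: "interval_family a b S" "total_length S \<le> measure lebesgue (\<Union>\<G>)"
    and sums: "\<And>g :: real \<Rightarrow> real \<Rightarrow> real. (\<And>x. g x x = 0) \<Longrightarrow>
      (\<Sum>K\<in>\<G>. g (Inf K) (Sup K)) = (\<Sum>p\<in>S. g (fst p) (snd p))"
    using interval_family_of_closed_intervals[OF \<open>finite \<G>\<close> intervals disjoint] by blast
  have K: "K = {Inf K..Sup K}" "Inf K \<le> Sup K" if "K \<in> \<G>" for K
    using intervals[OF that] by auto
  have "emeasure (interval_measure F) (\<Union>\<G>) \<le> (\<Sum>K\<in>\<G>. emeasure (interval_measure F) K)"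
  proof -
    have "K \<in> sets (interval_measure F)" if "K \<in> \<G>" for K
      using K(1)[OF that] by (metis atLeastAtMost_borel sets_interval_measure)
    then show ?thesis
      using emeasure_subadditive_finite[OF \<open>finite \<G>\<close>, of "\<lambda>K. K" "interval_measure F"] by auto
  qed
  also have "\<dots> = ennreal (\<Sum>K\<in>\<G>. F (Sup K) - F (Inf K))"
    using emeasure_interval_measure_Icc[OF K(2) _ cont] K mono by (simp add: mono_def)
  also have "(\<Sum>K\<in>\<G>. F (Sup K) - F (Inf K)) = variation_sum F S"
    unfolding sums[of "\<lambda>x y. F y - F x", simplified] variation_sum_def
    using S(1) mono by (intro sum.cong refl) (auto simp: mono_def dest: interval_familyD(2))
  also have "ennreal (variation_sum F S) \<le> ennreal e"
    using S measure_less by (intro ennreal_leI less_imp_le small) auto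
  finally show ?thesis .
qed

lemma emeasure_interval_measure_negligible_le:
  assumes mono: "mono F" and cont: "continuous_on UNIV F"
    and small: "\<And>S. interval_family a b S \<Longrightarrow> total_length S < d \<Longrightarrow> variation_sum F S < e"
    and "d > 0" and "negligible N" and "N \<subseteq> {a..b}"
  shows "emeasure (interval_measure F) N \<le> e"
proof -
  obtain \<D> where "countable \<D>"
    and D: "\<And>K. K \<in> \<D> \<Longrightarrow> K \<subseteq> cbox a b \<and> K \<noteq> {} \<and> (\<exists>c d. K = cbox c d)"
    and disjoint: "pairwise (\<lambda>A B. interior A \<inter> interior B = {}) \<D>"
    and cover: "N \<subseteq> \<Union>\<D>" and "\<Union>\<D> \<in> lmeasurable"
    and measure_D: "measure lebesgue (\<Union>\<D>) \<le> measure lebesgue N + d / 2"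
    using measurable_outer_intervals_bounded[OF negligible_imp_measurable[OF \<open>negligible N\<close>] _
        half_gt_zero[OF \<open>d > 0\<close>]] \<open>N \<subseteq> {a..b}\<close>
    by (metis cbox_interval)
  have intervals: "\<exists>x y. K = {x..y} \<and> a \<le> x \<and> x \<le> y \<and> y \<le> b" if K: "K \<in> \<D>" for K
  proof -
    obtain x y where "K = {x..y}" "K \<subseteq> {a..b}" "K \<noteq> {}"
      using D[OF K] by (auto simp: cbox_interval)
    then show ?thesis by auto
  qed
  have D_sets: "\<D> \<subseteq> sets (interval_measure F)"
    using intervals by (metis atLeastAtMost_borel sets_interval_measure subsetI)
  have "emeasure (interval_measure F) N \<le> emeasure (interval_measure F) (\<Union>\<D>)"
    using cover sets.countable_Union[OF \<open>countable \<D>\<close> D_sets] by (rule emeasure_mono)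
  also have "\<dots> \<le> ennreal e"
  proof (rule emeasure_countable_Union_le[OF \<open>countable \<D>\<close> D_sets])
    fix \<G> assume "finite \<G>" "\<G> \<subseteq> \<D>"
    have "measure lebesgue (\<Union>\<G>) \<le> measure lebesgue (\<Union>\<D>)"
    proof (rule measure_mono_fmeasurable)
      have "K \<in> sets lebesgue" if K: "K \<in> \<G>" for K
      proof -
        obtain x y where "K = {x..y}" using intervals[of K] \<open>\<G> \<subseteq> \<D>\<close> K by blast
        then show ?thesis by simp
      qed
      then show "\<Union>\<G> \<in> sets lebesgue"
        using \<open>finite \<G>\<close> by (intro sets.finite_Union) auto
    qed (use \<open>\<G> \<subseteq> \<D>\<close> \<open>\<Union>\<D> \<in> lmeasurable\<close> in auto)
    then have "measure lebesgue (\<Union>\<G>) < d"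
      using measure_D negligible_imp_measure0[OF \<open>negligible N\<close>] \<open>d > 0\<close> by linarith
    then show "emeasure (interval_measure F) (\<Union>\<G>) \<le> ennreal e"
      using \<open>finite \<G>\<close> \<open>\<G> \<subseteq> \<D>\<close> intervals pairwise_subset[OF disjoint \<open>\<G> \<subseteq> \<D>\<close>]
      by (intro interval_measure_Union_intervals_le[OF mono cont small]) auto
  qed
  finally show ?thesis .
qed

lemma interval_measure_absolutely_continuous:
  assumes mono: "mono F" and cont: "continuous_on UNIV F"
    and below: "\<And>x. x \<le> a \<Longrightarrow> F x = F a" and above: "\<And>x. b \<le> x \<Longrightarrow> F x = F b"
    and ac: "abs_continuous_on a b F"
  shows "absolutely_continuous lborel (interval_measure F)"
  unfolding absolutely_continuous_def
proof
  fix N :: "real set" assume N: "N \<in> null_sets lborel"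
  have "negligible N"
    using null_sets_completionI[OF N] by (simp add: negligible_iff_null_sets)
  then have "negligible (N \<inter> {a..b})"
    by (simp add: negligible_Int)
  have "emeasure (interval_measure F) (N \<inter> {a..b}) \<le> 0 + ennreal e" if "e > 0" for e
  proof -
    obtain d where "d > 0"
      and small: "\<And>S. interval_family a b S \<Longrightarrow> total_length S < d \<Longrightarrow> variation_sum F S < e"
      using abs_continuous_onE[OF ac \<open>e > 0\<close>] by blast
    from emeasure_interval_measure_negligible_le[OF mono cont small \<open>d > 0\<close> \<open>negligible (N \<inter> {a..b})\<close>]
    show ?thesis by simp
  qed
  then have "emeasure (interval_measure F) (N \<inter> {a..b}) \<le> 0"
    by (rule ennreal_le_epsilon)
  moreover have N_sets: "N \<in> sets (interval_measure F)"
    using null_setsD2[OF N] by simp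
  ultimately have "N \<inter> {a..b} \<in> null_sets (interval_measure F)"
    by (intro null_setsI) (simp_all add: sets.Int)
  then have "(N \<inter> {a..b}) \<union> (UNIV - {a<..b}) \<in> null_sets (interval_measure F)"
    using interval_measure_null_outside[OF mono cont below above] by (rule null_sets.Un)
  then show "N \<in> null_sets (interval_measure F)"
    using N_sets by (rule null_sets_subset) auto
qed

lemma interval_measure_has_density:
  assumes mono: "mono H" and cont: "continuous_on UNIV H"
    and below: "\<And>x. x \<le> a \<Longrightarrow> H x = H a" and above: "\<And>x. b \<le> x \<Longrightarrow> H x = H b"
    and ac: "abs_continuous_on a b H" and "a \<le> b"
  obtains D where "integrable lborel D" "\<And>x y. x \<le> y \<Longrightarrow> H y - H x = (LINT t:{x<..y}|lborel. D t)"
proof -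
  define \<mu> where "\<mu> = interval_measure H"
  have sets_\<mu>: "sets \<mu> = sets lborel"
    by (simp add: \<mu>_def)
  have Ioc: "emeasure \<mu> {x<..y} = H y - H x" if "x \<le> y" for x y
    unfolding \<mu>_def using that mono cont
    by (intro emeasure_interval_measure_Ioc) (auto simp: mono_def continuous_on_eq_continuous_within
        intro: continuous_within_subset)
  have abs_cont: "absolutely_continuous lborel \<mu>"
    unfolding \<mu>_def by (rule interval_measure_absolutely_continuous[OF mono cont below above ac])
  have "emeasure \<mu> UNIV = emeasure \<mu> ({a<..b} \<union> (UNIV - {a<..b}))"
    by simp
  also have "\<dots> = H b - H a"
    using interval_measure_null_outside[OF mono cont below above] Ioc[OF \<open>a \<le> b\<close>]
    by (subst emeasure_Un_null_set) (auto simp: \<mu>_def)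
  finally have \<mu>_UNIV: "emeasure \<mu> UNIV = H b - H a" .
  then have "finite_measure \<mu>"
    by (intro finite_measureI) (simp add: \<mu>_def)
  then obtain D where D_meas: "D \<in> borel_measurable lborel"
    and D_RN: "AE x in lborel. RN_deriv lborel \<mu> x = ennreal (D x)" and D_nonneg: "\<And>x. 0 \<le> D x"
    using sigma_finite_measure.real_RN_deriv[OF sigma_finite_lborel _ abs_cont sets_\<mu>] by metis
  have density: "density lborel (RN_deriv lborel \<mu>) = \<mu>"
    by (rule sigma_finite_measure.density_RN_deriv[OF sigma_finite_lborel abs_cont sets_\<mu>])
  have nn_integral: "(\<integral>\<^sup>+t. ennreal (indicator A t * D t) \<partial>lborel) = emeasure \<mu> A"
    if "A \<in> sets borel" for A
  proof -
    have "emeasure \<mu> A = (\<integral>\<^sup>+t. RN_deriv lborel \<mu> t * indicator A t \<partial>lborel)"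
      using that by (subst density[symmetric]) (simp add: emeasure_density)
    also have "\<dots> = (\<integral>\<^sup>+t. ennreal (indicator A t * D t) \<partial>lborel)"
      using D_RN by (intro nn_integral_cong_AE) (auto split: split_indicator)
    finally show ?thesis ..
  qed
  have "integrable lborel D"
  proof (rule integrableI_nonneg)
    show "(\<integral>\<^sup>+t. ennreal (D t) \<partial>lborel) < \<infinity>"
      using nn_integral[of UNIV] \<mu>_UNIV by simp
  qed (use D_meas D_nonneg in auto)
  moreover have "H y - H x = (LINT t:{x<..y}|lborel. D t)" if "x \<le> y" for x y
  proof -
    have "(LINT t:{x<..y}|lborel. D t) = enn2real (\<integral>\<^sup>+t. ennreal (indicator {x<..y} t * D t) \<partial>lborel)"
      unfolding set_lebesgue_integral_def using D_meas D_nonneg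
      by (subst integral_eq_nn_integral) auto
    also have "\<dots> = H y - H x"
      using nn_integral[of "{x<..y}"] Ioc[OF that] mono that by (simp add: mono_def)
    finally show ?thesis ..
  qed
  ultimately show ?thesis
    using that by blast
qed

lemma mono_abs_continuous_has_density:
  assumes "a \<le> b" "mono_on {a..b} F" "abs_continuous_on a b F"
  obtains g where "has_density_on F a b g"
proof -
  \<comment> \<open>\<open>interval_measure\<close> needs a monotone function on the whole real line\<close>
  define H where "H x = F (max a (min b x))" for x
  have H_F: "H x = F x" if "a \<le> x" "x \<le> b" for x
    using that by (simp add: H_def)
  have "mono H"
    unfolding H_def mono_def using assms(1) by (auto intro!: mono_onD[OF assms(2)])
  moreover have "continuous_on UNIV H"
    unfolding H_def using assms(1)
    by (intro continuous_on_compose2[OF abs_continuous_on_imp_continuous_on[OF assms(3)]]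
        continuous_intros) auto
  moreover have "H x = H a" if "x \<le> a" for x
    using that assms(1) by (simp add: H_def)
  moreover have "H x = H b" if "b \<le> x" for x
    using that assms(1) by (simp add: H_def)
  moreover have "abs_continuous_on a b H"
    using assms(3) H_F by (rule abs_continuous_on_cong)
  ultimately obtain D where "integrable lborel D"
    and D: "\<And>x y. x \<le> y \<Longrightarrow> H y - H x = (LINT t:{x<..y}|lborel. D t)"
    using interval_measure_has_density assms(1) by metis
  moreover have "F y - F x = (LINT t:{x<..y}|lborel. D t)" if "a \<le> x" "x \<le> y" "y \<le> b" for x y
    using D[of x y] H_F[of x] H_F[of y] that by simp
  ultimately have "has_density_on F a b D"
    unfolding has_density_on_def by blast
  then show ?thesis ..
qed

lemma abs_continuous_has_density:
  assumes "a \<le> b" "abs_continuous_on a b f"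
  obtains g where "has_density_on f a b g"
proof -
  obtain g1 where "has_density_on (variation f a) a b g1"
    using mono_abs_continuous_has_density[OF assms(1) mono_on_variation abs_continuous_on_variation]
      assms(2) by metis
  moreover obtain g2 where "has_density_on (\<lambda>x. variation f a x - f x) a b g2"
    using mono_abs_continuous_has_density[OF assms(1) mono_on_variation_diff
        abs_continuous_on_diff[OF abs_continuous_on_variation]] assms(2) by metis
  ultimately have "has_density_on (\<lambda>x. variation f a x - (variation f a x - f x)) a b (\<lambda>x. g1 x - g2 x)"
    by (rule has_density_on_diff)
  then show ?thesis
    using that by simp
qed

section \<open>Kernels converging weakly to zero\<close>

lemma tendsto_zero_by_approximation:
  fixes s :: "nat \<Rightarrow> real" and u :: "nat \<Rightarrow> nat \<Rightarrow> real"
  assumes close: "\<And>N n. \<bar>s n - u N n\<bar> \<le> t N" and "t \<longlonglongrightarrow> 0" and approx: "\<And>N. u N \<longlonglongrightarrow> 0"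
  shows "s \<longlonglongrightarrow> 0"
proof (rule LIMSEQ_I)
  fix r :: real assume "r > 0"
  then obtain N where N: "\<bar>t N\<bar> < r / 2"
    using LIMSEQ_D[OF \<open>t \<longlonglongrightarrow> 0\<close>, of "r / 2"] by auto
  obtain n0 where "\<And>n. n \<ge> n0 \<Longrightarrow> \<bar>u N n\<bar> < r / 2"
    using LIMSEQ_D[OF approx[of N], of "r / 2"] \<open>r > 0\<close> by auto
  then have "norm (s n - 0) < r" if "n \<ge> n0" for n
    using close[of n N] N that by fastforce
  then show "\<exists>n0. \<forall>n\<ge>n0. norm (s n - 0) < r" by blast
qed

lemma
  fixes k :: "real \<Rightarrow> real"
  assumes meas: "k \<in> borel_measurable borel" and bound: "\<And>x. \<bar>k x\<bar> \<le> indicator {a..b} x"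
    and A: "A \<in> sets borel"
  shows integrable_kernel_mult_indicator: "integrable lborel (\<lambda>x. k x * indicator A x)"
    and abs_integral_kernel_mult_indicator_le:
      "\<bar>\<integral>x. k x * indicator A x \<partial>lborel\<bar> \<le> measure lborel ({a..b} \<inter> A)"
proof -
  have "emeasure lborel ({a..b} \<inter> A) \<le> emeasure lborel {a..b}"
    by (intro emeasure_mono) auto
  then have int: "integrable lborel (indicator ({a..b} \<inter> A) :: real \<Rightarrow> real)"
    using A by (simp add: integrable_indicator_iff emeasure_lborel_Icc_eq order.strict_trans1)
  have le: "\<bar>k x * indicator A x\<bar> \<le> indicator ({a..b} \<inter> A) x" for x
    using bound[of x] by (auto simp: indicator_def abs_mult)
  show int_k: "integrable lborel (\<lambda>x. k x * indicator A x)"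
    by (rule Bochner_Integration.integrable_bound[OF int]) (use meas A le in auto)
  have "\<bar>\<integral>x. k x * indicator A x \<partial>lborel\<bar> \<le> (\<integral>x. indicator ({a..b} \<inter> A) x \<partial>lborel)"
    by (rule integral_abs_bound_integral[OF int_k int]) (simp add: le)
  also have "\<dots> = measure lborel ({a..b} \<inter> A)"
    using int by (simp add: integrable_indicator_iff)
  finally show "\<bar>\<integral>x. k x * indicator A x \<partial>lborel\<bar> \<le> measure lborel ({a..b} \<inter> A)" .
qed

lemma
  fixes k :: "real \<Rightarrow> real"
  assumes meas: "k \<in> borel_measurable borel" and le_one: "\<And>x. \<bar>k x\<bar> \<le> 1"
    and h: "integrable lborel h"
  shows integrable_kernel_mult: "integrable lborel (\<lambda>x. k x * h x)"
    and abs_integral_kernel_mult_le: "\<bar>\<integral>x. k x * h x \<partial>lborel\<bar> \<le> (\<integral>x. \<bar>h x\<bar> \<partial>lborel)"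
proof -
  have le: "\<bar>k x * h x\<bar> \<le> \<bar>h x\<bar>" for x
    using le_one[of x] by (simp add: abs_mult mult_left_le_one_le)
  show int: "integrable lborel (\<lambda>x. k x * h x)"
    by (rule Bochner_Integration.integrable_bound[OF h]) (use meas h le in auto)
  show "\<bar>\<integral>x. k x * h x \<partial>lborel\<bar> \<le> (\<integral>x. \<bar>h x\<bar> \<partial>lborel)"
    by (rule integral_abs_bound_integral[OF int]) (use h le in auto)
qed

lemma tendsto_integral_indicator_disjoint_UN:
  fixes k :: "nat \<Rightarrow> real \<Rightarrow> real" and A :: "nat \<Rightarrow> real set"
  assumes meas: "\<And>n. k n \<in> borel_measurable borel"
    and bound: "\<And>n x. \<bar>k n x\<bar> \<le> indicator {a..b} x"
    and "disjoint_family A" and A_sets: "\<And>i. A i \<in> sets borel"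
    and A_tendsto: "\<And>i. (\<lambda>n. \<integral>x. k n x * indicator (A i) x \<partial>lborel) \<longlonglongrightarrow> 0"
  shows "(\<lambda>n. \<integral>x. k n x * indicator (\<Union>i. A i) x \<partial>lborel) \<longlonglongrightarrow> 0"
proof -
  note int = integrable_kernel_mult_indicator[OF meas bound]
  define U where "U = (\<Union>i. A i)"
  define B where "B N = (\<Union>i<N. A i)" for N
  have U_sets: "U \<in> sets borel" and B_sets: "B N \<in> sets borel" for N
    using A_sets by (auto simp: U_def B_def)
  have "\<bar>(\<integral>x. k n x * indicator U x \<partial>lborel) - (\<Sum>i<N. \<integral>x. k n x * indicator (A i) x \<partial>lborel)\<bar>
      \<le> measure lborel ({a..b} \<inter> (U - B N))" for n N
  proof -
    have indicator_B: "indicator (B N) x = (\<Sum>i<N. indicator (A i) x :: real)" for x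
      unfolding B_def using \<open>disjoint_family A\<close>
      by (intro indicator_UN_disjoint) (auto simp: disjoint_family_on_def disjoint_family_on_mono)
    have "B N \<subseteq> U" by (auto simp: B_def U_def)
    then have "indicator U x = indicator (U - B N) x + (indicator (B N) x :: real)" for x
      by (auto simp: indicator_def)
    then have "(\<integral>x. k n x * indicator U x \<partial>lborel)
        = (\<integral>x. k n x * indicator (U - B N) x + (\<Sum>i<N. k n x * indicator (A i) x) \<partial>lborel)"
      by (simp only: distrib_left indicator_B sum_distrib_left)
    also have "\<dots> = (\<integral>x. k n x * indicator (U - B N) x \<partial>lborel)
        + (\<integral>x. (\<Sum>i<N. k n x * indicator (A i) x) \<partial>lborel)"
      by (rule Bochner_Integration.integral_add[OF int[OF sets.Diff[OF U_sets B_sets]]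
          Bochner_Integration.integrable_sum[OF int[OF A_sets]]])
    also have "(\<integral>x. (\<Sum>i<N. k n x * indicator (A i) x) \<partial>lborel)
        = (\<Sum>i<N. \<integral>x. k n x * indicator (A i) x \<partial>lborel)"
      by (rule Bochner_Integration.integral_sum[OF int[OF A_sets]])
    finally show ?thesis
      using abs_integral_kernel_mult_indicator_le[OF meas bound, of "U - B N" n] U_sets B_sets by simp
  qed
  moreover have "(\<lambda>N. measure lborel ({a..b} \<inter> (U - B N))) \<longlonglongrightarrow> 0"
  proof -
    have "emeasure lborel ({a..b} \<inter> (U - B N)) \<noteq> \<infinity>" for N
      using emeasure_mono[of "{a..b} \<inter> (U - B N)" "{a..b}" lborel]
      by (auto simp: emeasure_lborel_Icc_eq top_unique)
    then have "(\<lambda>N. measure lborel ({a..b} \<inter> (U - B N))) \<longlonglongrightarrow> measure lborel (\<Inter>N. {a..b} \<inter> (U - B N))"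
      using U_sets B_sets by (intro Lim_measure_decseq) (auto simp: decseq_def B_def)
    moreover have "(\<Inter>N. {a..b} \<inter> (U - B N)) = {}"
      by (auto simp: U_def B_def)
    ultimately show ?thesis by simp
  qed
  moreover have "(\<lambda>n. \<Sum>i<N. \<integral>x. k n x * indicator (A i) x \<partial>lborel) \<longlonglongrightarrow> 0" for N
    using A_tendsto by (intro tendsto_null_sum)
  ultimately show ?thesis
    unfolding U_def[symmetric] by (rule tendsto_zero_by_approximation)
qed

lemma tendsto_integral_indicator_of_half_lines:
  fixes k :: "nat \<Rightarrow> real \<Rightarrow> real"
  assumes meas: "\<And>n. k n \<in> borel_measurable borel"
    and bound: "\<And>n x. \<bar>k n x\<bar> \<le> indicator {a..b} x"
    and half_lines: "\<And>c. (\<lambda>n. \<integral>x. k n x * indicator {..c} x \<partial>lborel) \<longlonglongrightarrow> 0"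
    and "A \<in> sets borel"
  shows "(\<lambda>n. \<integral>x. k n x * indicator A x \<partial>lborel) \<longlonglongrightarrow> 0"
proof -
  have "Int_stable (range (atMost :: real \<Rightarrow> real set))"
    by (auto simp: Int_stable_def)
  moreover have "range atMost \<subseteq> Pow (UNIV :: real set)"
    by simp
  moreover have "A \<in> sigma_sets UNIV (range atMost)"
    using \<open>A \<in> sets borel\<close> by (simp add: borel_eq_atMost)
  ultimately show ?thesis
  proof (induction rule: sigma_sets_induct_disjoint)
    case (basic A)
    then show ?case using half_lines by auto
  next
    case empty
    show ?case by simp
  next
    case (compl A)
    have "A \<in> sets borel"
      using compl(1) by (simp add: borel_eq_atMost)
    have "k n x * indicator (UNIV - A) x = k n x * indicator {..b} x - k n x * indicator A x" for n x
      using bound[of n x] by (auto simp: indicator_def)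
    then have "(\<integral>x. k n x * indicator (UNIV - A) x \<partial>lborel) =
        (\<integral>x. k n x * indicator {..b} x \<partial>lborel) - (\<integral>x. k n x * indicator A x \<partial>lborel)" for n
      using integrable_kernel_mult_indicator[OF meas bound] \<open>A \<in> sets borel\<close> by simp
    then show ?case
      using tendsto_diff[OF half_lines[of b] compl(2)] by simp
  next
    case (union A)
    have "A i \<in> sets borel" for i
      using union(2) by (auto simp: borel_eq_atMost)
    from union(1) this union(3) show ?case
      by (rule tendsto_integral_indicator_disjoint_UN[OF meas bound])
  qed
qed

lemma tendsto_integral_of_half_lines:
  fixes k :: "nat \<Rightarrow> real \<Rightarrow> real"
  assumes meas: "\<And>n. k n \<in> borel_measurable borel"
    and bound: "\<And>n x. \<bar>k n x\<bar> \<le> indicator {a..b} x"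
    and half_lines: "\<And>c. (\<lambda>n. \<integral>x. k n x * indicator {..c} x \<partial>lborel) \<longlonglongrightarrow> 0"
    and "integrable lborel g"
  shows "(\<lambda>n. \<integral>x. k n x * g x \<partial>lborel) \<longlonglongrightarrow> 0"
proof -
  have le_one: "\<bar>k n x\<bar> \<le> 1" for n x
    using bound[of n x] by (cases "x \<in> {a..b}") auto
  note int = integrable_kernel_mult[OF meas le_one]
  from \<open>integrable lborel g\<close> show ?thesis
  proof (induction rule: integrable_induct)
    case (base A c)
    then have "(\<lambda>n. (\<integral>x. k n x * indicator A x \<partial>lborel) * c) \<longlonglongrightarrow> 0"
      by (intro tendsto_mult_left_zero tendsto_integral_indicator_of_half_lines[OF meas bound half_lines])
        auto
    moreover have "(\<integral>x. k n x * indicator A x \<partial>lborel) * c = (\<integral>x. k n x * (indicator A x *\<^sub>R c) \<partial>lborel)"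
      for n
      by (simp add: mult.assoc flip: integral_mult_left_zero)
    ultimately show ?case
      by simp
  next
    case (add f h)
    have "(\<integral>x. k n x * (f x + h x) \<partial>lborel) = (\<integral>x. k n x * f x \<partial>lborel) + (\<integral>x. k n x * h x \<partial>lborel)"
      for n
      using int add by (simp add: distrib_left)
    then show ?case
      using tendsto_add[OF add.IH] by simp
  next
    case (lim f s)
    have "\<bar>(\<integral>x. k n x * f x \<partial>lborel) - (\<integral>x. k n x * s i x \<partial>lborel)\<bar> \<le> (\<integral>x. \<bar>s i x - f x\<bar> \<partial>lborel)"
      for i n
      using abs_integral_kernel_mult_le[OF meas le_one, of "\<lambda>x. f x - s i x" n] int lim
      by (simp add: right_diff_distrib abs_minus_commute)
    moreover have "(\<lambda>i. \<integral>x. \<bar>s i x - f x\<bar> \<partial>lborel) \<longlonglongrightarrow> 0"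
    proof -
      have "(\<lambda>i. s i x) \<longlonglongrightarrow> f x" for x
        using lim by simp
      then have "AE x in lborel. (\<lambda>i. \<bar>s i x - f x\<bar>) \<longlonglongrightarrow> 0"
        by (simp add: tendsto_rabs_zero LIM_zero)
      moreover have "\<bar>s i x - f x\<bar> \<le> 3 * \<bar>f x\<bar>" for i x
        using lim(3)[of x i] abs_triangle_ineq4[of "s i x" "f x"] by simp
      ultimately have "(\<lambda>i. \<integral>x. \<bar>s i x - f x\<bar> \<partial>lborel) \<longlonglongrightarrow> (\<integral>x. 0 \<partial>(lborel :: real measure))"
        using lim by (intro integral_dominated_convergence[where w = "\<lambda>x. 3 * \<bar>f x\<bar>"]) auto
      then show ?thesis
        by simp
    qed
    ultimately show ?case
      using lim.IH by (rule tendsto_zero_by_approximation)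
  qed
qed

section \<open>The defect kernel\<close>

definition cell_lo :: "nat \<Rightarrow> nat \<Rightarrow> real" where
  "cell_lo n i = real i / real n"

definition cell_mid :: "nat \<Rightarrow> nat \<Rightarrow> real" where
  "cell_mid n i = real (Suc i) / real (Suc n)"

definition cell_hi :: "nat \<Rightarrow> nat \<Rightarrow> real" where
  "cell_hi n i = real (Suc i) / real n"

definition riemann_defect :: "(real \<Rightarrow> real) \<Rightarrow> nat \<Rightarrow> real" where
  "riemann_defect f n = (\<Sum>i<n. cell_mid n i * (f (cell_mid n i) - f (cell_lo n i))
     - (1 - cell_mid n i) * (f (cell_hi n i) - f (cell_mid n i)))"

text \<open>If \<open>f\<close> has density \<open>g\<close>, then \<open>riemann_defect f n\<close> is the integral of \<open>g\<close> against
  \<open>defect_kernel n\<close>; by \<open>cell_balance\<close> the kernel has mean zero on every cell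
  \<open>(cell_lo n i, cell_hi n i]\<close>.\<close>

definition defect_kernel :: "nat \<Rightarrow> real \<Rightarrow> real" where
  "defect_kernel n x = (\<Sum>i<n. cell_mid n i * indicator {cell_lo n i<..cell_mid n i} x
     - (1 - cell_mid n i) * indicator {cell_mid n i<..cell_hi n i} x)"

lemma cell_order:
  assumes "i < n"
  shows "0 \<le> cell_lo n i" "cell_lo n i \<le> cell_mid n i" "cell_mid n i \<le> cell_hi n i"
    "cell_hi n i \<le> 1" "cell_hi n i - cell_lo n i = 1 / n"
  using assms
  by (auto simp: cell_lo_def cell_mid_def cell_hi_def field_simps diff_divide_distrib[symmetric])

lemma cell_balance:
  assumes "i < n"
  shows "cell_mid n i * (cell_mid n i - cell_lo n i) = (1 - cell_mid n i) * (cell_hi n i - cell_mid n i)"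
  using assms by (simp add: cell_lo_def cell_mid_def cell_hi_def field_simps)

lemma cell_unique:
  assumes "i < n" "j < n" "cell_lo n i < x" "x \<le> cell_hi n i" "cell_lo n j < x" "x \<le> cell_hi n j"
  shows "i = j"
proof -
  have "real i < x * n" "x * n \<le> real i + 1" "real j < x * n" "x * n \<le> real j + 1"
    using assms by (auto simp: cell_lo_def cell_hi_def field_simps)
  then have "real i < real j + 1" "real j < real i + 1"
    by linarith+
  then show ?thesis by linarith
qed

lemma abs_sum_le_single_term:
  fixes g :: "'a \<Rightarrow> real"
  assumes "finite A" "\<And>i j. i \<in> A \<Longrightarrow> j \<in> A \<Longrightarrow> g i \<noteq> 0 \<Longrightarrow> g j \<noteq> 0 \<Longrightarrow> i = j"
    and "\<And>i. i \<in> A \<Longrightarrow> \<bar>g i\<bar> \<le> B" "0 \<le> B"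
  shows "\<bar>sum g A\<bar> \<le> B"
proof (cases "\<exists>i\<in>A. g i \<noteq> 0")
  case True
  then obtain i where "i \<in> A" "g i \<noteq> 0" by blast
  have "sum g A = g i + sum g (A - {i})"
    using assms(1) \<open>i \<in> A\<close> by (rule sum.remove)
  also have "sum g (A - {i}) = 0"
    using assms(2) \<open>i \<in> A\<close> \<open>g i \<noteq> 0\<close> by (intro sum.neutral) blast
  finally have "sum g A = g i" by simp
  then show ?thesis using assms(3) \<open>i \<in> A\<close> by simp
next
  case False
  then show ?thesis using assms(4) by simp
qed

lemma defect_kernel_borel [measurable]: "defect_kernel n \<in> borel_measurable borel"
  unfolding defect_kernel_def by measurable

lemma abs_defect_kernel_le: "\<bar>defect_kernel n x\<bar> \<le> indicator {0..1} x"
proof -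
  define t where "t i = cell_mid n i * indicator {cell_lo n i<..cell_mid n i} x
     - (1 - cell_mid n i) * indicator {cell_mid n i<..cell_hi n i} x" for i
  have t_zero: "t i = 0" if "i < n" "x \<notin> {cell_lo n i<..cell_hi n i}" for i
    using that cell_order[OF that(1)] by (auto simp: t_def indicator_def)
  have "\<bar>sum t {..<n}\<bar> \<le> indicator {0..1} x"
  proof (rule abs_sum_le_single_term)
    fix i j assume "i \<in> {..<n}" "j \<in> {..<n}" "t i \<noteq> 0" "t j \<noteq> 0"
    then show "i = j"
      using t_zero cell_unique[of i n j x] by auto
  next
    fix i assume "i \<in> {..<n}"
    then have i: "i < n" by simp
    show "\<bar>t i\<bar> \<le> indicator {0..1} x"
    proof (cases "x \<in> {cell_lo n i<..cell_hi n i}")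
      case True
      then have "x \<in> {0..1}" using cell_order[OF i] by auto
      then show ?thesis using cell_order[OF i] by (auto simp: t_def indicator_def)
    qed (use t_zero i in simp)
  qed simp_all
  then show ?thesis
    by (simp add: defect_kernel_def t_def)
qed

lemma riemann_defect_eq_integral:
  assumes "has_density_on f 0 1 g"
  shows "riemann_defect f n = (\<integral>x. defect_kernel n x * g x \<partial>lborel)"
proof -
  have g: "integrable lborel g"
    using assms by (simp add: has_density_on_def)
  have increment: "f y - f x = (\<integral>t. indicator {x<..y} t * g t \<partial>lborel)" if "0 \<le> x" "x \<le> y" "y \<le> 1" for x y
    using assms that by (simp add: has_density_on_def set_lebesgue_integral_def)
  have int: "integrable lborel (\<lambda>t. indicator A t * g t)" if "A \<in> sets borel" for A
    using integrable_mult_indicator[OF _ g, of A] that by simp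
  have "(\<integral>x. defect_kernel n x * g x \<partial>lborel) = (\<integral>x. (\<Sum>i<n.
      cell_mid n i * (indicator {cell_lo n i<..cell_mid n i} x * g x)
      - (1 - cell_mid n i) * (indicator {cell_mid n i<..cell_hi n i} x * g x)) \<partial>lborel)"
    unfolding defect_kernel_def sum_distrib_right
    by (intro Bochner_Integration.integral_cong refl sum.cong) (simp add: algebra_simps)
  also have "\<dots> = (\<Sum>i<n. cell_mid n i * (\<integral>x. indicator {cell_lo n i<..cell_mid n i} x * g x \<partial>lborel)
      - (1 - cell_mid n i) * (\<integral>x. indicator {cell_mid n i<..cell_hi n i} x * g x \<partial>lborel))"
    using int by (simp add: Bochner_Integration.integral_sum)
  also have "\<dots> = riemann_defect f n"
    unfolding riemann_defect_def
  proof (intro sum.cong refl)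
    fix i assume "i \<in> {..<n}"
    then have i: "i < n" by simp
    show "cell_mid n i * (\<integral>x. indicator {cell_lo n i<..cell_mid n i} x * g x \<partial>lborel)
        - (1 - cell_mid n i) * (\<integral>x. indicator {cell_mid n i<..cell_hi n i} x * g x \<partial>lborel)
      = cell_mid n i * (f (cell_mid n i) - f (cell_lo n i))
        - (1 - cell_mid n i) * (f (cell_hi n i) - f (cell_mid n i))"
      using increment[of "cell_lo n i" "cell_mid n i"] increment[of "cell_mid n i" "cell_hi n i"]
        cell_order[OF i] by simp
  qed
  finally show ?thesis ..
qed

lemma has_density_on_min:
  "has_density_on (\<lambda>x. min x c) a b (indicator ({a..b} \<inter> {..c}))"
  unfolding has_density_on_def
proof (intro conjI allI impI)
  have "emeasure lborel ({a..b} \<inter> {..c}) \<le> emeasure lborel {a..b}"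
    by (intro emeasure_mono) auto
  then show "integrable lborel (indicator ({a..b} \<inter> {..c}) :: real \<Rightarrow> real)"
    by (auto simp: integrable_indicator_iff emeasure_lborel_Icc_eq order.strict_trans1)
  fix x y assume "a \<le> x" "x \<le> y" "y \<le> b"
  then have "{x<..y} \<inter> ({a..b} \<inter> {..c}) = {x<..min y c}"
    by auto
  then have "(LINT t:{x<..y}|lborel. indicator ({a..b} \<inter> {..c}) t) = measure lborel {x<..min y c}"
    by (simp add: set_lebesgue_integral_def indicator_inter_arith[symmetric] del: Int_atMost)
  also have "\<dots> = min y c - min x c"
    using \<open>x \<le> y\<close> by (auto simp: min_def)
  finally show "min y c - min x c = (LINT t:{x<..y}|lborel. indicator ({a..b} \<inter> {..c}) t)" ..
qed

lemma abs_riemann_defect_min_le: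
  assumes "n > 0"
  shows "\<bar>riemann_defect (\<lambda>x. min x c) n\<bar> \<le> 1 / n"
proof -
  define t where "t i = cell_mid n i * (min (cell_mid n i) c - min (cell_lo n i) c)
     - (1 - cell_mid n i) * (min (cell_hi n i) c - min (cell_mid n i) c)" for i
  \<comment> \<open>\<open>\<lambda>x. min x c\<close> is affine on every cell not containing \<open>c\<close> in its interior\<close>
  have t_zero: "t i = 0" if "i < n" "\<not> (cell_lo n i < c \<and> c < cell_hi n i)" for i
  proof (cases "c \<le> cell_lo n i")
    case True
    then show ?thesis using cell_order[OF that(1)] by (simp add: t_def)
  next
    case False
    then show ?thesis
      using that(2) cell_order[OF that(1)] cell_balance[OF that(1)] by (simp add: t_def)
  qed
  have "\<bar>sum t {..<n}\<bar> \<le> 1 / n"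
  proof (rule abs_sum_le_single_term)
    fix i j assume "i \<in> {..<n}" "j \<in> {..<n}" "t i \<noteq> 0" "t j \<noteq> 0"
    then show "i = j"
      using t_zero cell_unique[of i n j c] by force
  next
    fix i assume "i \<in> {..<n}"
    then have i: "i < n" by simp
    note order = cell_order[OF i]
    define \<delta>1 where "\<delta>1 = min (cell_mid n i) c - min (cell_lo n i) c"
    define \<delta>2 where "\<delta>2 = min (cell_hi n i) c - min (cell_mid n i) c"
    have \<delta>: "0 \<le> \<delta>1" "\<delta>1 \<le> cell_mid n i - cell_lo n i" "0 \<le> \<delta>2" "\<delta>2 \<le> cell_hi n i - cell_mid n i"
      using order by (auto simp: \<delta>1_def \<delta>2_def min_def)
    have mid: "0 \<le> cell_mid n i" "cell_mid n i \<le> 1"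
      using order by auto
    have "\<bar>t i\<bar> \<le> cell_mid n i * \<delta>1 + (1 - cell_mid n i) * \<delta>2"
      using \<delta> mid unfolding t_def \<delta>1_def[symmetric] \<delta>2_def[symmetric]
      by (simp only: abs_le_iff) (intro conjI; simp)
    also have "\<dots> \<le> \<delta>1 + \<delta>2"
      using \<delta> mid by (intro add_mono mult_left_le_one_le) auto
    also have "\<dots> \<le> (cell_mid n i - cell_lo n i) + (cell_hi n i - cell_mid n i)"
      using \<delta> by simp
    also have "\<dots> = 1 / n"
      using order by simp
    finally show "\<bar>t i\<bar> \<le> 1 / n" .
  qed simp_all
  then show ?thesis
    by (simp add: riemann_defect_def t_def)
qed

lemma abs_integral_defect_kernel_half_line_le:
  assumes "n > 0"
  shows "\<bar>\<integral>x. defect_kernel n x * indicator {..c} x \<partial>lborel\<bar> \<le> 1 / n"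
proof -
  have "(\<lambda>x. defect_kernel n x * indicator {..c} x) = (\<lambda>x. defect_kernel n x * indicator ({0..1} \<inter> {..c}) x)"
  proof
    fix x
    show "defect_kernel n x * indicator {..c} x = defect_kernel n x * indicator ({0..1} \<inter> {..c}) x"
      using abs_defect_kernel_le[of n x] by (cases "x \<in> {0..1}") (auto simp: indicator_def)
  qed
  then have "(\<integral>x. defect_kernel n x * indicator {..c} x \<partial>lborel) = riemann_defect (\<lambda>x. min x c) n"
    by (simp only: riemann_defect_eq_integral[OF has_density_on_min])
  then show ?thesis
    using abs_riemann_defect_min_le[OF assms] by simp
qed

lemma riemann_defect_tendsto_zero:
  assumes "has_density_on f 0 1 g"
  shows "riemann_defect f \<longlonglongrightarrow> 0"
proof -
  have "(\<lambda>n. \<integral>x. defect_kernel n x * indicator {..c} x \<partial>lborel) \<longlonglongrightarrow> 0" for c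
  proof (rule Lim_null_comparison[OF _ lim_1_over_n])
    have "norm (\<integral>x. defect_kernel n x * indicator {..c} x \<partial>lborel) \<le> 1 / real n" if "n > 0" for n
      using abs_integral_defect_kernel_half_line_le[OF that] by simp
    then show "\<forall>\<^sub>F n in sequentially. norm (\<integral>x. defect_kernel n x * indicator {..c} x \<partial>lborel) \<le> 1 / real n"
      by (intro eventually_sequentiallyI[of 1]) simp
  qed
  moreover have "integrable lborel g"
    using assms by (simp add: has_density_on_def)
  ultimately have "(\<lambda>n. \<integral>x. defect_kernel n x * g x \<partial>lborel) \<longlonglongrightarrow> 0"
    by (rule tendsto_integral_of_half_lines[OF defect_kernel_borel abs_defect_kernel_le])
  then show ?thesis
    unfolding riemann_defect_eq_integral[OF assms] .
qed

section \<open>Riemann sums and the theorem\<close>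

lemma integral_eq_sum_cells:
  fixes f :: "real \<Rightarrow> real"
  assumes cont: "continuous_on {0..1} f" and "n > 0"
  shows "integral {0..1} f = (\<Sum>i<n. integral {cell_lo n i..cell_hi n i} f)"
proof -
  have "integral {0..1} f = (\<Sum>i<n. integral {0..cell_lo n (Suc i)} f - integral {0..cell_lo n i} f)"
    using \<open>n > 0\<close> by (subst sum_lessThan_telescope) (simp add: cell_lo_def)
  also have "\<dots> = (\<Sum>i<n. integral {cell_lo n i..cell_hi n i} f)"
  proof (intro sum.cong refl)
    fix i assume "i \<in> {..<n}"
    then have i: "i < n" by simp
    have "f integrable_on {0..cell_hi n i}"
      using cell_order[OF i] by (intro integrable_continuous_interval continuous_on_subset[OF cont]) auto
    then show "integral {0..cell_lo n (Suc i)} f - integral {0..cell_lo n i} f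
        = integral {cell_lo n i..cell_hi n i} f"
      using Henstock_Kurzweil_Integration.integral_combine[where a = 0 and c = "cell_lo n i"
          and b = "cell_hi n i" and f = f] cell_order[OF i]
      by (simp add: cell_lo_def cell_hi_def)
  qed
  finally show ?thesis .
qed

lemma riemann_sum_tendsto_integral:
  fixes f :: "real \<Rightarrow> real"
  assumes cont: "continuous_on {0..1} f"
  shows "(\<lambda>n. (\<Sum>i<n. f (cell_hi n i)) / n) \<longlonglongrightarrow> integral {0..1} f"
proof (rule LIMSEQ_I)
  fix r :: real assume "r > 0"
  have cont_cell: "continuous_on {cell_lo n i..cell_hi n i} f" if "i < n" for n i
    using cell_order[OF that] by (intro continuous_on_subset[OF cont]) auto
  obtain \<delta> where "\<delta> > 0"
    and \<delta>: "\<And>x y. x \<in> {0..1} \<Longrightarrow> y \<in> {0..1} \<Longrightarrow> dist y x < \<delta> \<Longrightarrow> dist (f y) (f x) < r / 2"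
    using compact_uniformly_continuous[OF cont compact_Icc] \<open>r > 0\<close>
    unfolding uniformly_continuous_on_def by (metis half_gt_zero)
  obtain N :: nat where "N > 0" "1 / N < \<delta>"
    using \<open>\<delta> > 0\<close> by (metis gr0I inverse_eq_divide real_arch_inverse)
  have "norm ((\<Sum>i<n. f (cell_hi n i)) / n - integral {0..1} f) < r" if "n \<ge> N" for n
  proof -
    have "n > 0" using that \<open>N > 0\<close> by simp
    have "1 / real n \<le> 1 / real N"
      using that \<open>N > 0\<close> by (intro divide_left_mono) auto
    then have "1 / n < \<delta>" using \<open>1 / N < \<delta>\<close> by linarith
    have "(\<Sum>i<n. f (cell_hi n i)) / n - integral {0..1} f
        = (\<Sum>i<n. f (cell_hi n i) / n - integral {cell_lo n i..cell_hi n i} f)"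
      by (simp add: integral_eq_sum_cells[OF cont \<open>n > 0\<close>] sum_divide_distrib sum_subtractf)
    also have "\<dots> = (\<Sum>i<n. integral {cell_lo n i..cell_hi n i} (\<lambda>x. f (cell_hi n i) - f x))"
    proof (intro sum.cong refl)
      fix i assume "i \<in> {..<n}"
      then have i: "i < n" by simp
      then show "f (cell_hi n i) / n - integral {cell_lo n i..cell_hi n i} f
          = integral {cell_lo n i..cell_hi n i} (\<lambda>x. f (cell_hi n i) - f x)"
        using cell_order[OF i] cont_cell[OF i]
        by (simp add: integral_diff integrable_continuous_interval)
    qed
    also have "norm \<dots> \<le> (\<Sum>i<n. r / 2 * (1 / n))"
    proof (rule order_trans[OF norm_sum sum_mono])
      fix i assume "i \<in> {..<n}"
      then have i: "i < n" by simp
      have "norm (f (cell_hi n i) - f x) \<le> r / 2" if "x \<in> {cell_lo n i..cell_hi n i}" for x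
        using \<delta>[of x "cell_hi n i"] that cell_order[OF i] \<open>1 / n < \<delta>\<close>
        by (auto simp: dist_real_def)
      moreover have "continuous_on {cell_lo n i..cell_hi n i} (\<lambda>x. f (cell_hi n i) - f x)"
        using cont_cell[OF i] by (intro continuous_on_diff continuous_on_const)
      ultimately have "norm (integral {cell_lo n i..cell_hi n i} (\<lambda>x. f (cell_hi n i) - f x))
          \<le> r / 2 * (cell_hi n i - cell_lo n i)"
        using cell_order[OF i] by (intro integral_bound) auto
      then show "norm (integral {cell_lo n i..cell_hi n i} (\<lambda>x. f (cell_hi n i) - f x)) \<le> r / 2 * (1 / n)"
        using cell_order(5)[OF i] by simp
    qed
    also have "\<dots> < r"
      using \<open>n > 0\<close> \<open>r > 0\<close> by simp
    finally show ?thesis .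
  qed
  then show "\<exists>N. \<forall>n\<ge>N. norm ((\<Sum>i<n. f (cell_hi n i)) / n - integral {0..1} f) < r"
    by blast
qed

lemma grid_mean_tendsto_integral:
  fixes f :: "real \<Rightarrow> real"
  assumes "continuous_on {0..1} f"
  shows "(\<lambda>n. (\<Sum>j\<le>n. f (real j / n)) / Suc n) \<longlonglongrightarrow> integral {0..1} f"
proof -
  have "(\<lambda>n. (\<Sum>i<n. f (cell_hi n i)) / n * (n / Suc n) + f 0 * inverse (Suc n))
      \<longlonglongrightarrow> integral {0..1} f * 1 + f 0 * 0"
    by (intro tendsto_intros riemann_sum_tendsto_integral[OF assms] LIMSEQ_n_over_Suc_n
        LIMSEQ_inverse_real_of_nat)
  moreover have "\<forall>\<^sub>F n in sequentially. (\<Sum>i<n. f (cell_hi n i)) / n * (n / Suc n) + f 0 * inverse (Suc n)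
      = (\<Sum>j\<le>n. f (real j / n)) / Suc n"
  proof (rule eventually_sequentiallyI[of 1])
    fix n :: nat assume "1 \<le> n"
    then have "n > 0" by simp
    have "(\<Sum>j\<le>n. f (real j / n)) = f 0 + (\<Sum>i<n. f (cell_hi n i))"
      by (simp add: sum.atMost_shift cell_hi_def)
    moreover have "S / n * (n / Suc n) + c * inverse (Suc n) = (c + S) / Suc n" for S c :: real
    proof -
      have "S / n * (n / Suc n) = S / Suc n"
        using \<open>n > 0\<close> by simp
      then show ?thesis
        by (simp only: divide_inverse distrib_right add.commute)
    qed
    ultimately show "(\<Sum>i<n. f (cell_hi n i)) / n * (n / Suc n) + f 0 * inverse (Suc n)
        = (\<Sum>j\<le>n. f (real j / n)) / Suc n"
      by simp
  qed
  ultimately show ?thesis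
    by (simp add: Lim_transform_eventually)
qed

lemma riemann_x_Suc: "riemann_x f (Suc n) = (\<Sum>i<n. f (cell_mid n i))"
  unfolding riemann_x_def cell_mid_def
  using sum.shift_bounds_Suc_ivl[of "\<lambda>k. f (real k / real (Suc n))" 0 n]
  by (simp add: atLeast0LessThan)

lemma riemann_x_Suc_diff:
  assumes "n > 0"
  shows "riemann_x f (Suc n) - riemann_x f n = riemann_defect f n + (\<Sum>j\<le>n. f (real j / n)) / Suc n"
proof -
  define F where "F j = f (real j / n)" for j
  define c_lo where "c_lo j = (if j < n then real (Suc j) / Suc n else 0)" for j
  define c_hi where "c_hi j = (if 0 < j then 1 - real j / Suc n else 0)" for j
  define c_x where "c_x j = (if 0 < j \<and> j < n then 1 else 0 :: real)" for j
  have lo: "(\<Sum>i<n. cell_mid n i * f (cell_lo n i)) = (\<Sum>j\<le>n. c_lo j * F j)"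
    by (simp add: lessThan_Suc_atMost[symmetric] cell_mid_def cell_lo_def F_def c_lo_def)
  have hi: "(\<Sum>i<n. (1 - cell_mid n i) * f (cell_hi n i)) = (\<Sum>j\<le>n. c_hi j * F j)"
    by (simp add: sum.atMost_shift cell_mid_def cell_hi_def F_def c_hi_def)
  have x: "riemann_x f n = (\<Sum>j\<le>n. c_x j * F j)"
    unfolding riemann_x_def F_def c_x_def by (rule sum.mono_neutral_cong_left) auto
  have c: "c_lo j + c_hi j = c_x j + 1 / Suc n" if j: "j \<le> n" for j
  proof -
    consider "j = 0" | "j = n" | "0 < j" "j < n"
      using j by (metis le_neq_implies_less not_gr0)
    then show ?thesis
    proof cases
      case 2
      then show ?thesis using assms by (simp add: c_lo_def c_hi_def c_x_def field_simps)
    qed (use assms in \<open>simp_all add: c_lo_def c_hi_def c_x_def add_divide_distrib\<close>)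
  qed
  have "(\<Sum>i<n. cell_mid n i * f (cell_lo n i)) + (\<Sum>i<n. (1 - cell_mid n i) * f (cell_hi n i))
      = (\<Sum>j\<le>n. (c_lo j + c_hi j) * F j)"
    unfolding lo hi by (simp add: sum.distrib distrib_right)
  also have "\<dots> = (\<Sum>j\<le>n. (c_x j + 1 / Suc n) * F j)"
    by (intro sum.cong refl) (simp add: c)
  also have "\<dots> = riemann_x f n + (\<Sum>j\<le>n. F j) / Suc n"
    unfolding x by (simp add: distrib_right sum.distrib sum_divide_distrib)
  finally have "(\<Sum>i<n. cell_mid n i * f (cell_lo n i)) + (\<Sum>i<n. (1 - cell_mid n i) * f (cell_hi n i))
      = riemann_x f n + (\<Sum>j\<le>n. F j) / Suc n" .
  moreover have "riemann_defect f n = riemann_x f (Suc n)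
      - (\<Sum>i<n. cell_mid n i * f (cell_lo n i)) - (\<Sum>i<n. (1 - cell_mid n i) * f (cell_hi n i))"
    unfolding riemann_defect_def riemann_x_Suc sum_subtractf[symmetric]
    by (intro sum.cong refl) (simp add: algebra_simps)
  ultimately show ?thesis
    by (simp add: F_def)
qed

theorem proposition1:
  fixes f :: "real \<Rightarrow> real"
  assumes "abs_continuous_on 0 1 f"
  shows "(\<lambda>n. riemann_x f (Suc n) - riemann_x f n) \<longlonglongrightarrow> integral {0..1} f"
proof -
  obtain g where "has_density_on f 0 1 g"
    using abs_continuous_has_density[OF zero_le_one assms] .
  then have "(\<lambda>n. riemann_defect f n + (\<Sum>j\<le>n. f (real j / n)) / Suc n) \<longlonglongrightarrow> 0 + integral {0..1} f"
    by (intro tendsto_add riemann_defect_tendsto_zero grid_mean_tendsto_integral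
        abs_continuous_on_imp_continuous_on[OF assms])
  moreover have "\<forall>\<^sub>F n in sequentially.
      riemann_defect f n + (\<Sum>j\<le>n. f (real j / n)) / Suc n = riemann_x f (Suc n) - riemann_x f n"
    using eventually_gt_at_top[of 0] by eventually_elim (simp add: riemann_x_Suc_diff)
  ultimately show ?thesis
    by (simp add: Lim_transform_eventually)
qed

end
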